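(* Assume the setting described in the context and let $T\in(0,\infty)$ and $\Theta\in C([0,T],\mathbb R^{\mathfrak d})$ satisfy for all $t\in[0,T]$ that $\Theta_t=\Theta_0-\int_0^t\mathcal G(\Theta_s)\,ds$. Then for all $t\in[0,T]$ it holds that $$V(\Theta_t)=V(\Theta_0)-4L\int_0^t\int_{[a,b]^{\ell_0}}\big\langle\mathcal N^{L,\Theta_s}_\infty(x)-f(x),\mathcal N^{L,\Theta_s}_\infty(x)-f(0)\big\rangle\,\mu(dx)\,ds.$$
   Context: Setting. Let $L,\mathfrak d\in\mathbb N=\{1,2,\dots\}$, $(\ell_k)_{k\in\mathbb N_0}\subseteq\mathbb N$, $a\in\mathbb R$, $b\in(a,\infty)$, $\mathscr A\in(0,\infty)$, $\mathscr B\in(\mathscr A,\infty)$ with $\mathfrak d=\sum_{k=1}^L\ell_k(\ell_{k-1}+1)$; let $\mathbf d_k=\sum_{h=1}^k\ell_h(\ell_{h-1}+1)$ for $k\in\mathbb N_0$. For $\theta=(\theta_1,\dots,\theta_{\mathfrak d})\in\mathbb R^{\mathfrak d}$, $k\in\{1,\dots,L\}$, $i\in\{1,\dots,\ell_k\}$, $j\in\{1,\dots,\ell_{k-1}\}$ let $\mathfrak w^{k,\theta}_{i,j}=\theta_{(i-1)\ell_{k-1}+j+\mathbf d_{k-1}}$ and $\mathfrak b^{k,\theta}_i=\theta_{\ell_k\ell_{k-1}+i+\mathbf d_{k-1}}$, let $\mathfrak w^{k,\theta}=(\mathfrak w^{k,\theta}_{i,j})_{i,j}\in\mathbb R^{\ell_k\times\ell_{k-1}}$,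 $\mathfrak b^{k,\theta}=(\mathfrak b^{k,\theta}_1,\dots,\mathfrak b^{k,\theta}_{\ell_k})\in\mathbb R^{\ell_k}$, and $\mathcal A^\theta_k\colon\mathbb R^{\ell_{k-1}}\to\mathbb R^{\ell_k}$, $\mathcal A^\theta_k(x)=\mathfrak b^{k,\theta}+\mathfrak w^{k,\theta}x$. Let $\mathscr R_\infty(x)=\max\{x,0\}$ and let $\mathscr R_r\colon\mathbb R\to\mathbb R$, $r\in[1,\infty)$, satisfy for all $r\in[1,\infty)$: $\mathscr R_r\in C^1(\mathbb R,\mathbb R)$, $\mathscr R_r(x)=0$ for all $x\le\mathscr A r^{-1}$, $0\le\mathscr R_r(y)\le\max\{y,0\}$ for all $y\in\mathbb R$, $\mathscr R_r(z)=z$ for all $z\ge\mathscr B r^{-1}$; assume $\sup_{r\in[1,\infty)}\sup_{x\in\mathbb R}|(\mathscr R_r)'(x)|<\infty$. $\|\cdot\|$, $\langle\cdot,\cdot\rangle$ are the Euclidean norm and scalar product on each $\mathbb R^n$; for $r\in[1,\infty]$, $\mathfrak M_r(x_1,\dots,x_n)=(\mathscr R_r(x_1),\dots,\mathscr R_r(x_n))$. For $r\in[1,\infty]$, $\theta\in\mathbb R^{\mathfrak d}$ define $\mathcal N^{k,\theta}_r\colon\mathbb R^{\ell_0}\to\mathbb R^{\ell_k}$, $k\in\{1,\dots,L\}$, by $\mathcal N^{1,\theta}_r=\mathcal A^\theta_1$ and $\mathcal N^{k+1,\theta}_r(x)=\mathcal A^\theta_{k+1}(\mathfrak M_{r^{1/k}}(\mathcal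 N^{k,\theta}_r(x)))$ (with $\infty^{1/k}=\infty$). Let $\mu$ be a measure on the Borel $\sigma$-algebra of $[a,b]^{\ell_0}$ with $\mu([a,b]^{\ell_0})\in\mathbb R$, let $f=(f_1,\dots,f_{\ell_L})\colon\mathbb R^{\ell_0}\to\mathbb R^{\ell_L}$ be measurable (only its values on $[a,b]^{\ell_0}$ and the value $f(0)$ enter), and for $r\in[1,\infty]$ let $\mathcal L_r\colon\mathbb R^{\mathfrak d}\to\mathbb R$ be given by $\mathcal L_r(\theta)=\int_{[a,b]^{\ell_0}}\|\mathcal N^{L,\theta}_r(x)-f(x)\|^2\,\mu(dx)$ (these integrals are real numbers as part of the setting). Let $\mathcal G\colon\mathbb R^{\mathfrak d}\to\mathbb R^{\mathfrak d}$ satisfy $\mathcal G(\theta)=\lim_{r\to\infty}(\nabla\mathcal L_r)(\theta)$ for every $\theta$ for which $((\nabla\mathcal L_r)(\theta))_{r\in[1,\infty)}$ is convergent as $r\to\infty$. Let $V\colon\mathbb R^{\mathfrak d}\to\mathbb R$, $V(\theta)=\big[\sum_{k=1}^L\big(k\|\mathfrak b^{k,\theta}\|^2+\sum_{i=1}^{\ell_k}\sum_{j=1}^{\ell_{k-1}}|\mathfrak w^{k,\theta}_{i,j}|^2\big)\big]-2L\langle f(0),\mathfrak b^{L,\theta}\rangle$. *)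

theory Defs
  imports "HOL-Analysis.Analysis" "HOL-Probability.Probability"
begin

text \<open>Vectors in R^n are represented as functions nat => real; only the
coordinates 1..n are relevant. The layer widths are l :: nat => nat.\<close>

definition dsum :: "(nat \<Rightarrow> nat) \<Rightarrow> nat \<Rightarrow> nat" where
  "dsum l k = (\<Sum>h=1..k. l h * (l (h - 1) + 1))"

definition wgt :: "(nat \<Rightarrow> nat) \<Rightarrow> nat \<Rightarrow> (nat \<Rightarrow> real) \<Rightarrow> nat \<Rightarrow> nat \<Rightarrow> real" where
  "wgt l k \<theta> i j = \<theta> ((i - 1) * l (k - 1) + j + dsum l (k - 1))"

definition bias :: "(nat \<Rightarrow> nat) \<Rightarrow> nat \<Rightarrow> (nat \<Rightarrow> real) \<Rightarrow> nat \<Rightarrow> real" where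
  "bias l k \<theta> i = \<theta> (l k * l (k - 1) + i + dsum l (k - 1))"

definition affine :: "(nat \<Rightarrow> nat) \<Rightarrow> nat \<Rightarrow> (nat \<Rightarrow> real) \<Rightarrow> (nat \<Rightarrow> real) \<Rightarrow> nat \<Rightarrow> real" where
  "affine l k \<theta> x i = bias l k \<theta> i + (\<Sum>j=1..l (k - 1). wgt l k \<theta> i j * x j)"

fun netw :: "(nat \<Rightarrow> nat) \<Rightarrow> (nat \<Rightarrow> real \<Rightarrow> real) \<Rightarrow> (nat \<Rightarrow> real) \<Rightarrow> nat \<Rightarrow> (nat \<Rightarrow> real) \<Rightarrow> nat \<Rightarrow> real" where
  "netw l \<sigma> \<theta> 0 x = x"
| "netw l \<sigma> \<theta> (Suc 0) x = affine l 1 \<theta> x"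
| "netw l \<sigma> \<theta> (Suc (Suc k)) x =
     affine l (Suc (Suc k)) \<theta> (\<lambda>j. \<sigma> (Suc k) (netw l \<sigma> \<theta> (Suc k) x j))"

definition relu :: "real \<Rightarrow> real" where
  "relu x = max x 0"

definition netR :: "(nat \<Rightarrow> nat) \<Rightarrow> (real \<Rightarrow> real \<Rightarrow> real) \<Rightarrow> real \<Rightarrow> (nat \<Rightarrow> real) \<Rightarrow> nat \<Rightarrow> (nat \<Rightarrow> real) \<Rightarrow> nat \<Rightarrow> real" where
  "netR l R r \<theta> k = netw l (\<lambda>m. R (r powr (1 / real m))) \<theta> k"

definition netInf :: "(nat \<Rightarrow> nat) \<Rightarrow> (nat \<Rightarrow> real) \<Rightarrow> nat \<Rightarrow> (nat \<Rightarrow> real) \<Rightarrow> nat \<Rightarrow> real" where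
  "netInf l \<theta> k = netw l (\<lambda>m. relu) \<theta> k"

definition sqerr :: "(nat \<Rightarrow> nat) \<Rightarrow> nat \<Rightarrow> ((nat \<Rightarrow> real) \<Rightarrow> nat \<Rightarrow> real) \<Rightarrow> ((nat \<Rightarrow> real) \<Rightarrow> nat \<Rightarrow> real) \<Rightarrow> (nat \<Rightarrow> real) \<Rightarrow> real" where
  "sqerr l L N f x = (\<Sum>i=1..l L. (N x i - f x i)\<^sup>2)"

definition lossR :: "(nat \<Rightarrow> nat) \<Rightarrow> nat \<Rightarrow> (real \<Rightarrow> real \<Rightarrow> real) \<Rightarrow> (nat \<Rightarrow> real) measure \<Rightarrow> ((nat \<Rightarrow> real) \<Rightarrow> nat \<Rightarrow> real) \<Rightarrow> real \<Rightarrow> (nat \<Rightarrow> real) \<Rightarrow> real" where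
  "lossR l L R \<mu> f r \<theta> = (\<integral>x. sqerr l L (netR l R r \<theta> L) f x \<partial>\<mu>)"

definition grad :: "((nat \<Rightarrow> real) \<Rightarrow> real) \<Rightarrow> (nat \<Rightarrow> real) \<Rightarrow> nat \<Rightarrow> real" where
  "grad F \<theta> i = deriv (\<lambda>t. F (\<theta>(i := \<theta> i + t))) 0"

text \<open>Lyapunov-type function V; f0 stands for f(0).\<close>
definition Vfun :: "(nat \<Rightarrow> nat) \<Rightarrow> nat \<Rightarrow> (nat \<Rightarrow> real) \<Rightarrow> (nat \<Rightarrow> real) \<Rightarrow> real" where
  "Vfun l L f0 \<theta> =
     (\<Sum>k=1..L. real k * (\<Sum>i=1..l k. (bias l k \<theta> i)\<^sup>2)
                + (\<Sum>i=1..l k. \<Sum>j=1..l (k - 1). (wgt l k \<theta> i j)\<^sup>2))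
     - 2 * real L * (\<Sum>i=1..l L. f0 i * bias l L \<theta> i)"

end

theory Submission
  imports Defs
begin

(* V is quadratic in the parameters.  Since every coordinate of Theta is the
   integral of the corresponding coordinate of -G(Theta), V(Theta t) - V(Theta 0) is minus the
   time integral of the directional derivative DV(Theta s)[G(Theta s)]; for the squares this rests
   on the identity  int g(s) * (int_{u <= s} g(u) du) ds = (int g)^2 / 2  (Fubini).
   The limit gradient G(theta) is the integral of the derivative of the squared error of the
   ReLU network, where ReLU' is the indicator of (0, oo): differentiate the smooth losses under
   the integral sign and let r -> oo by dominated convergence.  At a kink in layer k the derivative
   of the smooth activation is eventually 0, because the error of the earlier layers is
   O(r^(-1/(k-1))) = o(r^(-1/k)) while the activation of layer k vanishes below A r^(-1/k).
   Finally DV(theta)[G(theta)] is the derivative of the loss in the direction grad V(theta), and by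
   positive homogeneity of ReLU (Euler's identity) the output of layer k has derivative
   2 k N^k - [k = L] 2 L f(0) in this direction, which gives 4 L int <N - f, N - f(0)>. *)

section \<open>Integral identities\<close>

lemma integrable_lborel_pair_mult:
  fixes g h :: "real \<Rightarrow> real"
  assumes g: "integrable lborel g" and h: "integrable lborel h"
  shows "integrable (lborel \<Otimes>\<^sub>M lborel) (\<lambda>(s, u). g s * h u)"
proof (rule lborel_pair.Fubini_integrable)
  show "(\<lambda>(s, u). g s * h u) \<in> borel_measurable (lborel \<Otimes>\<^sub>M lborel)"
    using borel_measurable_integrable[OF g] borel_measurable_integrable[OF h] by measurable
  show "integrable lborel (\<lambda>s. LBINT u. norm (case (s, u) of (s, u) \<Rightarrow> g s * h u))"
    using g h by (simp add: abs_mult)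
  show "AE s in lborel. integrable lborel (\<lambda>u. case (s, u) of (s, u) \<Rightarrow> g s * h u)"
    using h by simp
qed

lemma
  fixes g :: "real \<Rightarrow> real"
  assumes g: "integrable lborel g"
  shows integrable_mult_cumulative: "integrable lborel (\<lambda>s. g s * (LBINT u:{..s}. g u))"
    and integral_mult_cumulative: "(LBINT s. g s * (LBINT u:{..s}. g u)) = (LBINT s. g s)\<^sup>2 / 2"
proof -
  have [measurable]: "g \<in> borel_measurable borel"
    using borel_measurable_integrable[OF g] by simp
  define F where "F s u = (if u \<le> s then g s * g u else 0)" for s u :: real
  have [measurable]: "(\<lambda>(s, u). F s u) \<in> borel_measurable (lborel \<Otimes>\<^sub>M lborel)"
    unfolding F_def by measurable
  from integrable_lborel_pair_mult[OF g g] have F_int: "integrable (lborel \<Otimes>\<^sub>M lborel) (\<lambda>(s, u). F s u)"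
    by (rule Bochner_Integration.integrable_bound) (auto simp: F_def abs_mult)
  have inner_u: "(LBINT u. F s u) = g s * (LBINT u:{..s}. g u)" for s
  proof -
    have "(LBINT u. F s u) = (LBINT u. g s * (indicator {..s} u * g u))"
      by (intro Bochner_Integration.integral_cong) (auto simp: F_def)
    then show ?thesis
      by (simp add: set_lebesgue_integral_def)
  qed
  have inner_s: "(LBINT s. F s u) = g u * ((LBINT s. g s) - (LBINT s:{..u}. g s))" for u
  proof -
    have "(LBINT s. F s u) = (LBINT s. g u * (g s - g s * indicator {..<u} s))"
      by (intro Bochner_Integration.integral_cong) (auto simp: F_def indicator_def)
    also have "(LBINT s. g s * indicator {..<u} s) = (LBINT s:{..u}. g s)"
      unfolding set_lebesgue_integral_def
      by (intro integral_cong_AE eventually_mono[OF AE_lborel_singleton[of u]]) (auto simp: indicator_def)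
    ultimately show ?thesis
      using g integrable_real_mult_indicator[OF _ g, of "{..<u}"] by (simp add: set_lebesgue_integral_def)
  qed
  have "integrable lborel (\<lambda>s. LBINT u. F s u)"
    using lborel_pair.integrable_fst'[OF F_int] by simp
  then show gH_int: "integrable lborel (\<lambda>s. g s * (LBINT u:{..s}. g u))"
    by (simp add: inner_u)
  txt \<open>The two iterated integrals of \<open>F\<close> over the half-plane \<open>u \<le> s\<close> are the claimed integral
    \<open>I\<close> and \<open>(\<integral>g)\<^sup>2 - I\<close>.\<close>
  have "(LBINT u. LBINT s. F s u) = (LBINT s. LBINT u. F s u)"
    using lborel_pair.Fubini_integral[of F] F_int by simp
  then have "(LBINT u. g u * ((LBINT s. g s) - (LBINT s:{..u}. g s))) = (LBINT s. g s * (LBINT u:{..s}. g u))"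
    by (simp add: inner_u inner_s)
  moreover have "(LBINT u. g u * ((LBINT s. g s) - (LBINT s:{..u}. g s)))
      = (LBINT s. g s)\<^sup>2 - (LBINT s. g s * (LBINT u:{..s}. g u))"
    using g gH_int by (simp add: right_diff_distrib power2_eq_square)
  ultimately show "(LBINT s. g s * (LBINT u:{..s}. g u)) = (LBINT s. g s)\<^sup>2 / 2"
    by simp
qed

definition decreases_by_integral :: "real \<Rightarrow> (real \<Rightarrow> real) \<Rightarrow> (real \<Rightarrow> real) \<Rightarrow> bool" where
  "decreases_by_integral T \<phi> \<psi> \<longleftrightarrow>
     (\<forall>t\<in>{0..T}. set_integrable lborel {0..t} \<psi> \<and> \<phi> t = \<phi> 0 - (LINT s:{0..t}|lborel. \<psi> s))"

lemma decreases_by_integralD: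
  assumes "decreases_by_integral T \<phi> \<psi>" and "t \<in> {0..T}"
  shows "set_integrable lborel {0..t} \<psi>" and "\<phi> t = \<phi> 0 - (LINT s:{0..t}|lborel. \<psi> s)"
  using assms unfolding decreases_by_integral_def by blast+

lemma decreases_by_integral_const: "decreases_by_integral T (\<lambda>_. c) (\<lambda>_. 0)"
  by (simp add: decreases_by_integral_def set_integrable_def)

lemma decreases_by_integral_add:
  assumes "decreases_by_integral T \<phi>1 \<psi>1" and "decreases_by_integral T \<phi>2 \<psi>2"
  shows "decreases_by_integral T (\<lambda>t. \<phi>1 t + \<phi>2 t) (\<lambda>s. \<psi>1 s + \<psi>2 s)"
  unfolding decreases_by_integral_def
proof
  fix t assume "t \<in> {0..T}"
  note D1 = decreases_by_integralD[OF assms(1) this] and D2 = decreases_by_integralD[OF assms(2) this]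
  show "set_integrable lborel {0..t} (\<lambda>s. \<psi>1 s + \<psi>2 s) \<and>
      \<phi>1 t + \<phi>2 t = \<phi>1 0 + \<phi>2 0 - (LINT s:{0..t}|lborel. \<psi>1 s + \<psi>2 s)"
    using D1 D2 by (simp add: set_integral_add)
qed

lemma decreases_by_integral_scale:
  assumes "decreases_by_integral T \<phi> \<psi>"
  shows "decreases_by_integral T (\<lambda>t. c * \<phi> t) (\<lambda>s. c * \<psi> s)"
  unfolding decreases_by_integral_def
proof
  fix t assume "t \<in> {0..T}"
  note D = decreases_by_integralD[OF assms this]
  show "set_integrable lborel {0..t} (\<lambda>s. c * \<psi> s) \<and>
      c * \<phi> t = c * \<phi> 0 - (LINT s:{0..t}|lborel. c * \<psi> s)"
    using D by (simp add: set_integral_mult_right right_diff_distrib)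
qed

lemma decreases_by_integral_diff:
  assumes "decreases_by_integral T \<phi>1 \<psi>1" and "decreases_by_integral T \<phi>2 \<psi>2"
  shows "decreases_by_integral T (\<lambda>t. \<phi>1 t - \<phi>2 t) (\<lambda>s. \<psi>1 s - \<psi>2 s)"
  using decreases_by_integral_add[OF assms(1) decreases_by_integral_scale[OF assms(2), of "-1"]]
  by simp

lemma decreases_by_integral_sum:
  assumes "finite I" and "\<And>i. i \<in> I \<Longrightarrow> decreases_by_integral T (\<phi> i) (\<psi> i)"
  shows "decreases_by_integral T (\<lambda>t. \<Sum>i\<in>I. \<phi> i t) (\<lambda>s. \<Sum>i\<in>I. \<psi> i s)"
  using assms
  by (induction I rule: finite_induct)
     (simp_all add: decreases_by_integral_const decreases_by_integral_add)

lemma decreases_by_integral_square: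
  assumes "decreases_by_integral T \<phi> \<psi>"
  shows "decreases_by_integral T (\<lambda>t. (\<phi> t)\<^sup>2) (\<lambda>s. 2 * \<phi> s * \<psi> s)"
  unfolding decreases_by_integral_def
proof
  fix t assume t: "t \<in> {0..T}"
  define g where "g s = indicator {0..t} s * \<psi> s" for s
  define H where "H s = (LBINT u:{..s}. g u)" for s
  note D = decreases_by_integralD[OF assms]
  have g: "integrable lborel g"
    using D(1)[OF t] unfolding set_integrable_def g_def by simp
  have \<phi>_H: "\<phi> s = \<phi> 0 - H s" if "s \<in> {0..t}" for s
  proof -
    have "H s = (LINT u:{0..s}|lborel. \<psi> u)"
      using that unfolding H_def g_def set_lebesgue_integral_def
      by (intro Bochner_Integration.integral_cong) (auto simp: indicator_def)
    with D(2)[of s] that t show ?thesis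
      by simp
  qed
  have rate: "indicator {0..t} s * (2 * \<phi> s * \<psi> s) = 2 * (\<phi> 0 * g s - g s * H s)" for s
  proof (cases "s \<in> {0..t}")
    case True
    then show ?thesis unfolding \<phi>_H[OF True] by (simp add: g_def algebra_simps)
  qed (simp add: g_def)
  have I: "(LBINT s. g s) = \<phi> 0 - \<phi> t"
    using D(2)[OF t] unfolding set_lebesgue_integral_def g_def by simp
  have gH: "integrable lborel (\<lambda>s. g s * H s)" "(LBINT s. g s * H s) = (LBINT s. g s)\<^sup>2 / 2"
    unfolding H_def by (rule integrable_mult_cumulative[OF g], rule integral_mult_cumulative[OF g])
  show "set_integrable lborel {0..t} (\<lambda>s. 2 * \<phi> s * \<psi> s) \<and>
      (\<phi> t)\<^sup>2 = (\<phi> 0)\<^sup>2 - (LINT s:{0..t}|lborel. 2 * \<phi> s * \<psi> s)"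
  proof
    have "integrable lborel (\<lambda>s. 2 * (\<phi> 0 * g s - g s * H s))"
      using g gH by simp
    then show "set_integrable lborel {0..t} (\<lambda>s. 2 * \<phi> s * \<psi> s)"
      unfolding set_integrable_def real_scaleR_def rate .
    have "(LINT s:{0..t}|lborel. 2 * \<phi> s * \<psi> s) = 2 * (\<phi> 0 * (LBINT s. g s) - (LBINT s. g s * H s))"
      unfolding set_lebesgue_integral_def real_scaleR_def rate using g gH by simp
    then show "(\<phi> t)\<^sup>2 = (\<phi> 0)\<^sup>2 - (LINT s:{0..t}|lborel. 2 * \<phi> s * \<psi> s)"
      unfolding gH(2) I by (simp add: power2_eq_square field_simps)
  qed
qed

lemma abs_difference_quotient_le:
  fixes \<phi> \<phi>' :: "real \<Rightarrow> real"
  assumes "\<And>t. (\<phi> has_real_derivative \<phi>' t) (at t)" and "\<And>t. \<bar>t\<bar> \<le> 1 \<Longrightarrow> \<bar>\<phi>' t\<bar> \<le> w"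
    and "\<bar>h\<bar> \<le> 1"
  shows "\<bar>(\<phi> h - \<phi> 0) / h\<bar> \<le> w"
proof -
  have "norm (\<phi> h - \<phi> 0) \<le> w * norm (h - 0)"
    using assms by (intro field_differentiable_bound[of "{-1..1}"]) (auto intro: has_field_derivative_at_within)
  moreover have "0 \<le> w"
    using assms(2)[of 0] by simp
  ultimately show ?thesis
    by (cases "h = 0") (simp_all add: divide_le_eq)
qed

lemma has_real_derivative_integral:
  fixes \<phi> \<phi>' :: "real \<Rightarrow> 'a \<Rightarrow> real" and w :: "'a \<Rightarrow> real"
  assumes int: "\<And>t. integrable M (\<phi> t)"
    and der: "\<And>x t. x \<in> space M \<Longrightarrow> ((\<lambda>s. \<phi> s x) has_real_derivative \<phi>' t x) (at t)"
    and meas: "\<phi>' 0 \<in> borel_measurable M"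
    and w: "integrable M w"
    and bound: "\<And>x t. x \<in> space M \<Longrightarrow> \<bar>t\<bar> \<le> 1 \<Longrightarrow> \<bar>\<phi>' t x\<bar> \<le> w x"
  shows "((\<lambda>t. \<integral>x. \<phi> t x \<partial>M) has_real_derivative (\<integral>x. \<phi>' 0 x \<partial>M)) (at 0)"
proof -
  have quotient_bound: "\<bar>(\<phi> h x - \<phi> 0 x) / h\<bar> \<le> w x" if "x \<in> space M" and "\<bar>h\<bar> \<le> 1" for x h
    by (rule abs_difference_quotient_le[of "\<lambda>s. \<phi> s x" "\<lambda>t. \<phi>' t x"]) (use der bound that in auto)
  have "((\<lambda>h. ((\<integral>x. \<phi> h x \<partial>M) - (\<integral>x. \<phi> 0 x \<partial>M)) / h) \<longlongrightarrow> (\<integral>x. \<phi>' 0 x \<partial>M)) (at 0)"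
  proof (rule tendsto_at_iff_sequentially[THEN iffD2], intro allI impI)
    fix X :: "nat \<Rightarrow> real" assume X: "\<forall>n. X n \<in> UNIV - {0}" "X \<longlonglongrightarrow> 0"
    obtain N where N: "\<And>n. n \<ge> N \<Longrightarrow> \<bar>X n\<bar> \<le> 1"
      using LIMSEQ_D[OF X(2), of 1] by (auto intro: less_imp_le)
    define q where "q n x = (\<phi> (X (n + N)) x - \<phi> 0 x) / X (n + N)" for n x
    have "(\<lambda>n. \<integral>x. q n x \<partial>M) \<longlonglongrightarrow> (\<integral>x. \<phi>' 0 x \<partial>M)"
    proof (rule integral_dominated_convergence[OF meas _ w])
      show "q n \<in> borel_measurable M" for n
        unfolding q_def using int by measurable
      show "AE x in M. (\<lambda>n. q n x) \<longlonglongrightarrow> \<phi>' 0 x"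
      proof (rule AE_I2)
        fix x assume x: "x \<in> space M"
        have "((\<lambda>h. (\<phi> h x - \<phi> 0 x) / h) \<longlongrightarrow> \<phi>' 0 x) (at 0)"
          using der[OF x, of 0] by (simp add: has_field_derivative_iff)
        from tendsto_at_iff_sequentially[THEN iffD1, OF this, rule_format, of X]
        have "(\<lambda>n. (\<phi> (X n) x - \<phi> 0 x) / X n) \<longlonglongrightarrow> \<phi>' 0 x"
          using X by (simp add: comp_def)
        then show "(\<lambda>n. q n x) \<longlonglongrightarrow> \<phi>' 0 x"
          unfolding q_def by (rule LIMSEQ_ignore_initial_segment)
      qed
      show "AE x in M. norm (q n x) \<le> w x" for n
        using N quotient_bound unfolding q_def by auto
    qed
    moreover have "(\<integral>x. q n x \<partial>M) = ((\<integral>x. \<phi> (X (n + N)) x \<partial>M) - (\<integral>x. \<phi> 0 x \<partial>M)) / X (n + N)" for n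
      unfolding q_def using int by simp
    ultimately show "((\<lambda>h. ((\<integral>x. \<phi> h x \<partial>M) - (\<integral>x. \<phi> 0 x \<partial>M)) / h) \<circ> X) \<longlonglongrightarrow> (\<integral>x. \<phi>' 0 x \<partial>M)"
      by (simp add: comp_def LIMSEQ_offset[of _ N])
  qed
  then show ?thesis
    by (simp add: has_field_derivative_iff)
qed

section \<open>Parameter indices\<close>

definition widx :: "(nat \<Rightarrow> nat) \<Rightarrow> nat \<Rightarrow> nat \<Rightarrow> nat \<Rightarrow> nat" where
  "widx l k i j = (i - 1) * l (k - 1) + j + dsum l (k - 1)"

definition bidx :: "(nat \<Rightarrow> nat) \<Rightarrow> nat \<Rightarrow> nat \<Rightarrow> nat" where
  "bidx l k i = l k * l (k - 1) + i + dsum l (k - 1)"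

lemma wgt_eq_widx: "wgt l k \<theta> i j = \<theta> (widx l k i j)"
  by (simp add: wgt_def widx_def)

lemma bias_eq_bidx: "bias l k \<theta> i = \<theta> (bidx l k i)"
  by (simp add: bias_def bidx_def)

lemma dsum_Suc: "dsum l (Suc k) = dsum l k + l (Suc k) * (l k + 1)"
  by (simp add: dsum_def)

lemma dsum_mono: "k \<le> k' \<Longrightarrow> dsum l k \<le> dsum l k'"
  unfolding dsum_def by (rule sum_mono2) auto

text \<open>The parameters of layer \<open>k\<close> occupy the block \<open>dsum l (k - 1) + 1, \<dots>, dsum l k\<close>: first the
  weights row by row, then the biases.\<close>

lemma dsum_block_eq:
  assumes "1 \<le> k" "1 \<le> k'"
    and "a \<in> {1..l k * (l (k - 1) + 1)}" "a' \<in> {1..l k' * (l (k' - 1) + 1)}"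
    and "dsum l (k - 1) + a = dsum l (k' - 1) + a'"
  shows "k = k' \<and> a = a'"
proof -
  have False if "h < h'" "1 \<le> h" "b \<in> {1..l h * (l (h - 1) + 1)}" "1 \<le> b'"
    "dsum l (h - 1) + b = dsum l (h' - 1) + b'" for h h' b b'
  proof -
    have "dsum l h \<le> dsum l (h' - 1)"
      using that by (intro dsum_mono) auto
    moreover have "dsum l h = dsum l (h - 1) + l h * (l (h - 1) + 1)"
      using that dsum_Suc[of l "h - 1"] by simp
    ultimately show False
      using that by auto
  qed
  then have "k = k'"
    using assms by (metis linorder_neqE_nat atLeastAtMost_iff)
  then show ?thesis
    using assms(5) by simp
qed

lemma widx_block:
  assumes "i \<in> {1..l k}" "j \<in> {1..l (k - 1)}"
  shows "widx l k i j = dsum l (k - 1) + ((i - 1) * l (k - 1) + j)"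
    and "1 \<le> (i - 1) * l (k - 1) + j" and "(i - 1) * l (k - 1) + j \<le> l k * l (k - 1)"
proof -
  have "(i - 1) * l (k - 1) + j \<le> (l k - 1) * l (k - 1) + l (k - 1)"
    using assms by (intro add_mono mult_right_mono) auto
  also have "\<dots> = l k * l (k - 1)"
    using assms by (cases "l k") auto
  finally show "(i - 1) * l (k - 1) + j \<le> l k * l (k - 1)" .
qed (use assms in \<open>simp_all add: widx_def\<close>)

lemma bidx_block: "bidx l k i = dsum l (k - 1) + (l k * l (k - 1) + i)"
  by (simp add: bidx_def)

lemma bidx_in: "k \<in> {1..L} \<Longrightarrow> i \<in> {1..l k} \<Longrightarrow> bidx l k i \<in> {1..dsum l L}"
  using dsum_Suc[of l "k - 1"] dsum_mono[of k L l] by (auto simp: bidx_def)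

lemma widx_in: "k \<in> {1..L} \<Longrightarrow> i \<in> {1..l k} \<Longrightarrow> j \<in> {1..l (k - 1)} \<Longrightarrow> widx l k i j \<in> {1..dsum l L}"
  using widx_block[of i l k j] bidx_in[of k L i l] by (auto simp: bidx_def)

lemma bidx_eq_iff:
  assumes "1 \<le> k" "i \<in> {1..l k}" "1 \<le> k'" "i' \<in> {1..l k'}"
  shows "bidx l k i = bidx l k' i' \<longleftrightarrow> k = k' \<and> i = i'"
  using dsum_block_eq[OF assms(1,3), of "l k * l (k - 1) + i" l "l k' * l (k' - 1) + i'"] assms
  by (auto simp: bidx_block distrib_left)

lemma mult_add_eq_iff:
  fixes q q' b b' n :: nat
  assumes "q * n + b = q' * n + b'" "b < n" "b' < n"
  shows "q = q' \<and> b = b'"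
proof -
  have "(q * n + b) mod n = (q' * n + b') mod n"
    using assms(1) by simp
  then have "b = b'"
    using assms(2,3) by simp
  then show ?thesis
    using assms by simp
qed

lemma widx_eq_iff:
  assumes "1 \<le> k" "i \<in> {1..l k}" "j \<in> {1..l (k - 1)}" "1 \<le> k'" "i' \<in> {1..l k'}" "j' \<in> {1..l (k' - 1)}"
  shows "widx l k i j = widx l k' i' j' \<longleftrightarrow> k = k' \<and> i = i' \<and> j = j'"
proof
  assume eq: "widx l k i j = widx l k' i' j'"
  note w = widx_block[OF assms(2,3)] and w' = widx_block[OF assms(5,6)]
  have k: "k = k'" and "(i - 1) * l (k - 1) + j = (i' - 1) * l (k - 1) + j'"
    using dsum_block_eq[OF assms(1,4), of "(i - 1) * l (k - 1) + j" l "(i' - 1) * l (k' - 1) + j'"]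
      w w' eq assms by (auto simp: distrib_left)
  then have "(i - 1) * l (k - 1) + (j - 1) = (i' - 1) * l (k - 1) + (j' - 1)"
    using assms by simp
  then have "i - 1 = i' - 1 \<and> j - 1 = j' - 1"
  proof (rule mult_add_eq_iff)
    have "1 \<le> j" "j \<le> l (k - 1)" "1 \<le> j'" "j' \<le> l (k - 1)"
      using assms k by auto
    then show "j - 1 < l (k - 1)" "j' - 1 < l (k - 1)"
      by linarith+
  qed
  then show "k = k' \<and> i = i' \<and> j = j'"
    using k assms by auto
qed simp

lemma widx_neq_bidx:
  assumes "1 \<le> k" "i \<in> {1..l k}" "j \<in> {1..l (k - 1)}" "1 \<le> k'" "i' \<in> {1..l k'}"
  shows "widx l k i j \<noteq> bidx l k' i'"
proof
  assume eq: "widx l k i j = bidx l k' i'"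
  note w = widx_block[OF assms(2,3)]
  have "k = k' \<and> (i - 1) * l (k - 1) + j = l k' * l (k' - 1) + i'"
    using dsum_block_eq[OF assms(1,4), of "(i - 1) * l (k - 1) + j" l "l k' * l (k' - 1) + i'"]
      w eq assms by (auto simp: bidx_block distrib_left)
  then show False
    using w(3) assms by auto
qed

section \<open>The function V\<close>

text \<open>\<open>Vfun_deriv l L f0 \<theta> g\<close> is the derivative of \<open>Vfun l L f0\<close> at \<open>\<theta>\<close> in direction \<open>g\<close>, so that
  \<open>\<lambda>q. Vfun_deriv l L f0 \<theta> (indicator {q})\<close> is its gradient.\<close>

definition Vfun_deriv :: "(nat \<Rightarrow> nat) \<Rightarrow> nat \<Rightarrow> (nat \<Rightarrow> real) \<Rightarrow> (nat \<Rightarrow> real) \<Rightarrow> (nat \<Rightarrow> real) \<Rightarrow> real" where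
  "Vfun_deriv l L f0 \<theta> g =
     (\<Sum>k=1..L. real k * (\<Sum>i=1..l k. 2 * bias l k \<theta> i * bias l k g i)
                + (\<Sum>i=1..l k. \<Sum>j=1..l (k - 1). 2 * wgt l k \<theta> i j * wgt l k g i j))
     - 2 * real L * (\<Sum>i=1..l L. f0 i * bias l L g i)"

lemma Vfun_deriv_cong:
  assumes "\<And>p. p \<in> {1..dsum l L} \<Longrightarrow> g p = g' p"
  shows "Vfun_deriv l L f0 \<theta> g = Vfun_deriv l L f0 \<theta> g'"
  unfolding Vfun_deriv_def bias_eq_bidx wgt_eq_widx
  using assms bidx_in[of _ L _ l] widx_in[of _ L _ l] by (auto intro!: sum.cong arg_cong2[where f = "(-)"])

lemma has_bochner_integral_Vfun_deriv:
  assumes "\<And>p. p \<in> {1..dsum l L} \<Longrightarrow> integrable M (F p)"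
  shows "has_bochner_integral M (\<lambda>x. Vfun_deriv l L f0 \<theta> (\<lambda>p. F p x)) (Vfun_deriv l L f0 \<theta> (\<lambda>p. \<integral>x. F p x \<partial>M))"
  unfolding Vfun_deriv_def bias_eq_bidx wgt_eq_widx
  by (intro has_bochner_integral_diff has_bochner_integral_sum has_bochner_integral_add
      has_bochner_integral_mult_right has_bochner_integral_integrable assms bidx_in widx_in) auto

lemma Vfun_decreases_by_integral:
  assumes "1 \<le> L" and "\<And>p. p \<in> {1..dsum l L} \<Longrightarrow> decreases_by_integral T (\<lambda>t. \<Theta> t p) (\<lambda>s. g s p)"
  shows "decreases_by_integral T (\<lambda>t. Vfun l L f0 (\<Theta> t)) (\<lambda>s. Vfun_deriv l L f0 (\<Theta> s) (g s))"
  unfolding Vfun_def Vfun_deriv_def bias_eq_bidx wgt_eq_widx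
  by (intro decreases_by_integral_diff decreases_by_integral_sum decreases_by_integral_add
      decreases_by_integral_scale decreases_by_integral_square assms(2) bidx_in widx_in) (use assms(1) in auto)

lemma sum_delta_pair:
  assumes "finite K" "\<And>k'. finite (I k')" "k \<in> K" "i \<in> I k"
  shows "(\<Sum>k'\<in>K. \<Sum>i'\<in>I k'. if k' = k \<and> i' = i then c k' i' else 0) = c k i"
proof -
  have "(\<Sum>i'\<in>I k'. if k' = k \<and> i' = i then c k' i' else 0) = (if k' = k then c k i else 0)" for k'
    using assms by (cases "k' = k") auto
  then show ?thesis
    using assms by simp
qed

lemma sum_delta_triple:
  assumes "finite K" "\<And>k'. finite (I k')" "\<And>k' i'. finite (J k' i')" "k \<in> K" "i \<in> I k" "j \<in> J k i"
  shows "(\<Sum>k'\<in>K. \<Sum>i'\<in>I k'. \<Sum>j'\<in>J k' i'. if k' = k \<and> i' = i \<and> j' = j then c k' i' j' else 0) = c k i j"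
proof -
  have "(\<Sum>j'\<in>J k' i'. if k' = k \<and> i' = i \<and> j' = j then c k' i' j' else 0) =
      (if k' = k \<and> i' = i then c k i j else 0)" for k' i'
    using assms by auto
  then show ?thesis
    using sum_delta_pair[of K I k i "\<lambda>_ _. c k i j"] assms by simp
qed

lemma Vfun_deriv_indicator_bias:
  assumes k: "k \<in> {1..L}" and i: "i \<in> {1..l k}"
  shows "Vfun_deriv l L f0 \<theta> (indicator {bidx l k i}) =
    2 * real k * bias l k \<theta> i - (if k = L then 2 * real L * f0 i else 0)"
proof -
  have ind_b: "indicator {bidx l k i} (bidx l k' i') = (if k' = k \<and> i' = i then 1 else 0 :: real)"
    if "k' \<in> {1..L}" "i' \<in> {1..l k'}" for k' i'
    using bidx_eq_iff[of k i l k' i'] k i that by auto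
  have ind_w: "indicator {bidx l k i} (widx l k' i' j') = (0 :: real)"
    if "k' \<in> {1..L}" "i' \<in> {1..l k'}" "j' \<in> {1..l (k' - 1)}" for k' i' j'
    using widx_neq_bidx[of k' i' l j' k i] k i that by auto
  have "(\<Sum>k'=1..L. real k' * (\<Sum>i'=1..l k'. 2 * bias l k' \<theta> i' * indicator {bidx l k i} (bidx l k' i')))
      = (\<Sum>k'=1..L. \<Sum>i'=1..l k'. if k' = k \<and> i' = i then 2 * real k' * bias l k' \<theta> i' else 0)"
    by (auto simp: sum_distrib_left ind_b intro!: sum.cong)
  also have "\<dots> = 2 * real k * bias l k \<theta> i"
    using k i by (intro sum_delta_pair) auto
  finally have biases: "(\<Sum>k'=1..L. real k' * (\<Sum>i'=1..l k'. 2 * bias l k' \<theta> i' * indicator {bidx l k i} (bidx l k' i')))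
      = 2 * real k * bias l k \<theta> i" .
  have "(\<Sum>i'=1..l L. f0 i' * indicator {bidx l k i} (bidx l L i')) =
      (\<Sum>k'\<in>{L}. \<Sum>i'=1..l k'. if k' = k \<and> i' = i then f0 i' else 0)"
    using k by (auto simp: ind_b intro!: sum.cong)
  also have "\<dots> = (if k = L then f0 i else 0)"
    using i sum_delta_pair[of "{L}" "\<lambda>k'. {1..l k'}" L i "\<lambda>_. f0"] by auto
  finally have last_layer: "(\<Sum>i'=1..l L. f0 i' * indicator {bidx l k i} (bidx l L i')) = (if k = L then f0 i else 0)" .
  have weights: "(\<Sum>k'=1..L. \<Sum>i'=1..l k'. \<Sum>j'=1..l (k' - 1). 2 * wgt l k' \<theta> i' j' * indicator {bidx l k i} (widx l k' i' j')) = 0"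
    by (auto simp: ind_w intro!: sum.neutral)
  show ?thesis
    unfolding Vfun_deriv_def bias_eq_bidx[of _ _ "indicator _"] wgt_eq_widx[of _ _ "indicator _"] sum.distrib
    unfolding biases weights last_layer by simp
qed

lemma Vfun_deriv_indicator_wgt:
  assumes k: "k \<in> {1..L}" and i: "i \<in> {1..l k}" and j: "j \<in> {1..l (k - 1)}"
  shows "Vfun_deriv l L f0 \<theta> (indicator {widx l k i j}) = 2 * wgt l k \<theta> i j"
proof -
  have ind_b: "indicator {widx l k i j} (bidx l k' i') = (0 :: real)"
    if "k' \<in> {1..L}" "i' \<in> {1..l k'}" for k' i'
    using widx_neq_bidx[of k i l j k' i'] k i j that by auto
  have ind_w: "indicator {widx l k i j} (widx l k' i' j') = (if k' = k \<and> i' = i \<and> j' = j then 1 else 0 :: real)"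
    if "k' \<in> {1..L}" "i' \<in> {1..l k'}" "j' \<in> {1..l (k' - 1)}" for k' i' j'
    using widx_eq_iff[of k i l j k' i' j'] k i j that by auto
  have "(\<Sum>k'=1..L. \<Sum>i'=1..l k'. \<Sum>j'=1..l (k' - 1). 2 * wgt l k' \<theta> i' j' * indicator {widx l k i j} (widx l k' i' j'))
      = (\<Sum>k'=1..L. \<Sum>i'=1..l k'. \<Sum>j'=1..l (k' - 1). if k' = k \<and> i' = i \<and> j' = j then 2 * wgt l k' \<theta> i' j' else 0)"
    by (auto simp: ind_w intro!: sum.cong)
  also have "\<dots> = 2 * wgt l k \<theta> i j"
    using k i j by (intro sum_delta_triple) auto
  finally show ?thesis
    unfolding Vfun_deriv_def bias_eq_bidx[of _ _ "indicator _"] wgt_eq_widx[of _ _ "indicator _"]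
    using k by (simp add: ind_b)
qed

section \<open>Derivatives of the realization\<close>

definition activated :: "(nat \<Rightarrow> nat) \<Rightarrow> (nat \<Rightarrow> real \<Rightarrow> real) \<Rightarrow> (nat \<Rightarrow> real) \<Rightarrow> nat \<Rightarrow> (nat \<Rightarrow> real) \<Rightarrow> nat \<Rightarrow> real" where
  "activated l \<sigma> \<theta> k x = (if k = 0 then x else (\<lambda>j. \<sigma> k (netw l \<sigma> \<theta> k x j)))"

lemma netw_Suc: "netw l \<sigma> \<theta> (Suc k) x = affine l (Suc k) \<theta> (activated l \<sigma> \<theta> k x)"
  by (cases k) (simp_all add: activated_def)

fun dnetw :: "(nat \<Rightarrow> nat) \<Rightarrow> (nat \<Rightarrow> real \<Rightarrow> real) \<Rightarrow> (nat \<Rightarrow> real \<Rightarrow> real) \<Rightarrow> (nat \<Rightarrow> real)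
    \<Rightarrow> (nat \<Rightarrow> real) \<Rightarrow> nat \<Rightarrow> (nat \<Rightarrow> real) \<Rightarrow> nat \<Rightarrow> real" where
  "dnetw l \<sigma> \<sigma>' \<theta> v 0 x = (\<lambda>i. 0)"
| "dnetw l \<sigma> \<sigma>' \<theta> v (Suc k) x = (\<lambda>i. affine l (Suc k) v (activated l \<sigma> \<theta> k x) i
     + (\<Sum>j=1..l k. wgt l (Suc k) \<theta> i j * (\<sigma>' k (netw l \<sigma> \<theta> k x j) * dnetw l \<sigma> \<sigma>' \<theta> v k x j)))"

lemma affine_has_real_derivative:
  assumes "\<And>j. j \<in> {1..l (k - 1)} \<Longrightarrow> ((\<lambda>s. y s j) has_real_derivative y' j) (at t)"
  shows "((\<lambda>s. affine l k (\<lambda>q. \<theta> q + s * v q) (y s) i) has_real_derivative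
     affine l k v (y t) i + (\<Sum>j=1..l (k - 1). wgt l k (\<lambda>q. \<theta> q + t * v q) i j * y' j)) (at t)"
proof -
  have "((\<lambda>s. bias l k \<theta> i + s * bias l k v i + (\<Sum>j=1..l (k - 1). (wgt l k \<theta> i j + s * wgt l k v i j) * y s j))
      has_real_derivative bias l k v i + (\<Sum>j=1..l (k - 1). wgt l k v i j * y t j + y' j * (wgt l k \<theta> i j + t * wgt l k v i j))) (at t)"
    by (auto intro!: derivative_eq_intros assms)
  then show ?thesis
    by (simp add: affine_def bias_def wgt_def sum.distrib algebra_simps)
qed

lemma netw_has_real_derivative:
  assumes "\<And>m y. (\<sigma> m has_real_derivative \<sigma>' m y) (at y)"
  shows "((\<lambda>s. netw l \<sigma> (\<lambda>q. \<theta> q + s * v q) k x i) has_real_derivative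
           dnetw l \<sigma> \<sigma>' (\<lambda>q. \<theta> q + t * v q) v k x i) (at t)"
proof (induction k arbitrary: i)
  case (Suc k)
  have "((\<lambda>s. activated l \<sigma> (\<lambda>q. \<theta> q + s * v q) k x j) has_real_derivative
      \<sigma>' k (netw l \<sigma> (\<lambda>q. \<theta> q + t * v q) k x j) * dnetw l \<sigma> \<sigma>' (\<lambda>q. \<theta> q + t * v q) v k x j) (at t)" for j
    using DERIV_chain2[OF assms Suc.IH] by (cases k) (simp_all add: activated_def)
  from affine_has_real_derivative[OF this, of l "Suc k"]
  show ?case
    by (simp add: netw_Suc)
qed simp

lemma dnetw_add:
  "dnetw l \<sigma> \<sigma>' \<theta> (\<lambda>q. v q + w q) k x i = dnetw l \<sigma> \<sigma>' \<theta> v k x i + dnetw l \<sigma> \<sigma>' \<theta> w k x i"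
  by (induction k arbitrary: i)
     (simp_all add: affine_def bias_def wgt_def sum.distrib algebra_simps)

lemma dnetw_scale: "dnetw l \<sigma> \<sigma>' \<theta> (\<lambda>q. c * v q) k x i = c * dnetw l \<sigma> \<sigma>' \<theta> v k x i"
  by (induction k arbitrary: i)
     (simp_all add: affine_def bias_def wgt_def sum_distrib_left algebra_simps)

lemma dnetw_diff:
  "dnetw l \<sigma> \<sigma>' \<theta> (\<lambda>q. v q - w q) k x i = dnetw l \<sigma> \<sigma>' \<theta> v k x i - dnetw l \<sigma> \<sigma>' \<theta> w k x i"
  using dnetw_add[of l \<sigma> \<sigma>' \<theta> v "\<lambda>q. (- 1) * w q"] dnetw_scale[of l \<sigma> \<sigma>' \<theta> "- 1" w] by simp

lemma dnetw_sum:
  assumes "finite S"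
  shows "dnetw l \<sigma> \<sigma>' \<theta> (\<lambda>q. \<Sum>s\<in>S. v s q) k x i = (\<Sum>s\<in>S. dnetw l \<sigma> \<sigma>' \<theta> (v s) k x i)"
  using assms
proof (induction S rule: finite_induct)
  case empty
  then show ?case
    using dnetw_scale[of l \<sigma> \<sigma>' \<theta> 0 "\<lambda>_. 0"] by simp
qed (simp add: dnetw_add)

lemma netw_measurable:
  assumes "\<And>j. j \<in> {1..l 0} \<Longrightarrow> (\<lambda>x. x j) \<in> borel_measurable M"
    and "\<And>m. \<sigma> m \<in> borel_measurable borel"
  shows "(\<lambda>x. netw l \<sigma> \<theta> (Suc k) x i) \<in> borel_measurable M"
proof (induction k arbitrary: i)
  case 0
  show ?case
    using assms(1) by (simp add: affine_def)
next
  case (Suc k)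
  show ?case
    using measurable_compose[OF Suc.IH assms(2)] by (simp add: affine_def)
qed

lemma dnetw_measurable:
  assumes "\<And>j. j \<in> {1..l 0} \<Longrightarrow> (\<lambda>x. x j) \<in> borel_measurable M"
    and "\<And>m. \<sigma> m \<in> borel_measurable borel" and "\<And>m. \<sigma>' m \<in> borel_measurable borel"
  shows "(\<lambda>x. dnetw l \<sigma> \<sigma>' \<theta> v (Suc k) x i) \<in> borel_measurable M"
proof (induction k arbitrary: i)
  case 0
  show ?case
    using assms(1) by (simp add: affine_def activated_def)
next
  case (Suc k)
  note N = netw_measurable[OF assms(1,2)]
  show ?case
    using measurable_compose[OF N assms(2)] measurable_compose[OF N assms(3)] Suc.IH
    by (simp add: affine_def activated_def)
qed

lemma affine_bound:
  assumes "k \<in> {1..L}" "i \<in> {1..l k}" and "\<forall>q\<in>{1..dsum l L}. \<bar>\<theta> q\<bar> \<le> M"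
    and "\<forall>j\<in>{1..l (k - 1)}. \<bar>y j\<bar> \<le> Y"
  shows "\<bar>affine l k \<theta> y i\<bar> \<le> M * (1 + real (l (k - 1)) * Y)"
proof -
  have "\<bar>bias l k \<theta> i\<bar> \<le> M"
    using assms bidx_in[of k L i l] by (simp add: bias_eq_bidx)
  moreover have "\<bar>\<Sum>j=1..l (k - 1). wgt l k \<theta> i j * y j\<bar> \<le> (\<Sum>j=1..l (k - 1). M * Y)"
  proof (intro order.trans[OF sum_abs] sum_mono)
    fix j assume j: "j \<in> {1..l (k - 1)}"
    have "\<bar>wgt l k \<theta> i j\<bar> \<le> M"
      using assms j widx_in[of k L i l j] by (simp add: wgt_eq_widx)
    then show "\<bar>wgt l k \<theta> i j * y j\<bar> \<le> M * Y"
      unfolding abs_mult using assms(4) j by (intro mult_mono) auto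
  qed
  ultimately show ?thesis
    unfolding affine_def by (simp add: algebra_simps)
qed

fun netw_bound :: "(nat \<Rightarrow> nat) \<Rightarrow> real \<Rightarrow> real \<Rightarrow> nat \<Rightarrow> real" where
  "netw_bound l M X 0 = X"
| "netw_bound l M X (Suc k) = M * (1 + real (l k) * netw_bound l M X k)"

fun dnetw_bound :: "(nat \<Rightarrow> nat) \<Rightarrow> real \<Rightarrow> real \<Rightarrow> real \<Rightarrow> real \<Rightarrow> nat \<Rightarrow> real" where
  "dnetw_bound l M X c V 0 = 0"
| "dnetw_bound l M X c V (Suc k) =
     V * (1 + real (l k) * netw_bound l M X k) + M * real (l k) * c * dnetw_bound l M X c V k"

context
  fixes l :: "nat \<Rightarrow> nat" and L :: nat and M X :: real and \<sigma> :: "nat \<Rightarrow> real \<Rightarrow> real"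
    and \<theta> x :: "nat \<Rightarrow> real"
  assumes \<theta>: "\<forall>q\<in>{1..dsum l L}. \<bar>\<theta> q\<bar> \<le> M" and x: "\<forall>j\<in>{1..l 0}. \<bar>x j\<bar> \<le> X"
    and \<sigma>: "\<And>m y. \<bar>\<sigma> m y\<bar> \<le> \<bar>y\<bar>"
begin

lemma netw_activated_bound:
  "k \<le> L \<Longrightarrow> j \<in> {1..l k} \<Longrightarrow> \<bar>activated l \<sigma> \<theta> k x j\<bar> \<le> netw_bound l M X k"
proof (induction k arbitrary: j)
  case (Suc k)
  have "\<bar>activated l \<sigma> \<theta> (Suc k) x j\<bar> \<le> \<bar>affine l (Suc k) \<theta> (activated l \<sigma> \<theta> k x) j\<bar>"
    using \<sigma> by (simp add: activated_def netw_Suc)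
  also have "\<dots> \<le> netw_bound l M X (Suc k)"
    using affine_bound[of "Suc k" L j l \<theta> M] Suc \<theta> by simp
  finally show ?case .
qed (use x in \<open>simp add: activated_def\<close>)

lemma netw_bound:
  assumes "1 \<le> k" "k \<le> L" "i \<in> {1..l k}"
  shows "\<bar>netw l \<sigma> \<theta> k x i\<bar> \<le> netw_bound l M X k"
proof -
  obtain k' where k': "k = Suc k'"
    using assms(1) by (cases k) auto
  show ?thesis
    using affine_bound[of k L i l \<theta> M] netw_activated_bound[of k'] assms \<theta>
    by (simp add: k' netw_Suc)
qed

lemma dnetw_bound:
  assumes v: "\<forall>q\<in>{1..dsum l L}. \<bar>v q\<bar> \<le> V" and \<sigma>': "\<And>m y. \<bar>\<sigma>' m y\<bar> \<le> c"
  shows "k \<le> L \<Longrightarrow> i \<in> {1..l k} \<Longrightarrow> \<bar>dnetw l \<sigma> \<sigma>' \<theta> v k x i\<bar> \<le> dnetw_bound l M X c V k"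
proof (induction k arbitrary: i)
  case (Suc k)
  have "\<bar>affine l (Suc k) v (activated l \<sigma> \<theta> k x) i\<bar> \<le> V * (1 + real (l k) * netw_bound l M X k)"
    using affine_bound[of "Suc k" L i l v V] Suc.prems v netw_activated_bound by simp
  moreover have "\<bar>\<Sum>j=1..l k. wgt l (Suc k) \<theta> i j * (\<sigma>' k (netw l \<sigma> \<theta> k x j) * dnetw l \<sigma> \<sigma>' \<theta> v k x j)\<bar>
      \<le> (\<Sum>j=1..l k. M * (c * dnetw_bound l M X c V k))"
  proof (intro order.trans[OF sum_abs] sum_mono)
    fix j assume j: "j \<in> {1..l k}"
    have "\<bar>wgt l (Suc k) \<theta> i j\<bar> \<le> M"
      using \<theta> Suc.prems j widx_in[of "Suc k" L i l j] by (simp add: wgt_eq_widx)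
    moreover have "\<bar>\<sigma>' k (netw l \<sigma> \<theta> k x j) * dnetw l \<sigma> \<sigma>' \<theta> v k x j\<bar> \<le> c * dnetw_bound l M X c V k"
      unfolding abs_mult using Suc j \<sigma>' order_trans[OF abs_ge_zero \<sigma>'] by (intro mult_mono) auto
    ultimately show "\<bar>wgt l (Suc k) \<theta> i j * (\<sigma>' k (netw l \<sigma> \<theta> k x j) * dnetw l \<sigma> \<sigma>' \<theta> v k x j)\<bar>
        \<le> M * (c * dnetw_bound l M X c V k)"
      unfolding abs_mult[of "wgt l (Suc k) \<theta> i j"] by (intro mult_mono) auto
  qed
  ultimately show ?case
    by (simp add: algebra_simps)
qed simp

end

definition sqerr_deriv :: "(nat \<Rightarrow> nat) \<Rightarrow> nat \<Rightarrow> ((nat \<Rightarrow> real) \<Rightarrow> nat \<Rightarrow> real)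
    \<Rightarrow> (nat \<Rightarrow> real \<Rightarrow> real) \<Rightarrow> (nat \<Rightarrow> real \<Rightarrow> real) \<Rightarrow> (nat \<Rightarrow> real) \<Rightarrow> (nat \<Rightarrow> real) \<Rightarrow> (nat \<Rightarrow> real) \<Rightarrow> real" where
  "sqerr_deriv l L f \<sigma> \<sigma>' \<theta> v x = (\<Sum>m=1..l L. 2 * (netw l \<sigma> \<theta> L x m - f x m) * dnetw l \<sigma> \<sigma>' \<theta> v L x m)"

lemma sqerr_has_real_derivative:
  assumes "\<And>m y. (\<sigma> m has_real_derivative \<sigma>' m y) (at y)"
  shows "((\<lambda>s. sqerr l L (netw l \<sigma> (\<lambda>q. \<theta> q + s * v q) L) f x) has_real_derivative
    sqerr_deriv l L f \<sigma> \<sigma>' (\<lambda>q. \<theta> q + t * v q) v x) (at t)"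
  unfolding sqerr_def sqerr_deriv_def
  by (auto intro!: derivative_eq_intros netw_has_real_derivative[OF assms] simp: algebra_simps)

lemma sqerr_deriv_add:
  "sqerr_deriv l L f \<sigma> \<sigma>' \<theta> (\<lambda>q. v q + w q) x = sqerr_deriv l L f \<sigma> \<sigma>' \<theta> v x + sqerr_deriv l L f \<sigma> \<sigma>' \<theta> w x"
  unfolding sqerr_deriv_def dnetw_add sum.distrib[symmetric] by (simp add: algebra_simps)

lemma sqerr_deriv_diff:
  "sqerr_deriv l L f \<sigma> \<sigma>' \<theta> (\<lambda>q. v q - w q) x = sqerr_deriv l L f \<sigma> \<sigma>' \<theta> v x - sqerr_deriv l L f \<sigma> \<sigma>' \<theta> w x"
  unfolding sqerr_deriv_def dnetw_diff sum_subtractf[symmetric] by (simp add: algebra_simps)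

lemma sqerr_deriv_scale:
  "sqerr_deriv l L f \<sigma> \<sigma>' \<theta> (\<lambda>q. c * v q) x = c * sqerr_deriv l L f \<sigma> \<sigma>' \<theta> v x"
  by (simp add: sqerr_deriv_def dnetw_scale sum_distrib_left algebra_simps)

lemma sqerr_deriv_sum:
  assumes "finite S"
  shows "sqerr_deriv l L f \<sigma> \<sigma>' \<theta> (\<lambda>q. \<Sum>s\<in>S. v s q) x = (\<Sum>s\<in>S. sqerr_deriv l L f \<sigma> \<sigma>' \<theta> (v s) x)"
  unfolding sqerr_deriv_def dnetw_sum[OF assms] sum_distrib_left
  by (subst sum.swap) (simp add: algebra_simps)

lemma sqerr_deriv_Vfun_grad:
  "sqerr_deriv l L f \<sigma> \<sigma>' \<theta> (\<lambda>q. Vfun_deriv l L f0 \<theta> (indicator {q})) x =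
     Vfun_deriv l L f0 \<theta> (\<lambda>p. sqerr_deriv l L f \<sigma> \<sigma>' \<theta> (indicator {p}) x)"
proof -
  have grad: "(\<lambda>q. Vfun_deriv l L f0 \<theta> (indicator {q})) =
     (\<lambda>q. (\<Sum>k=1..L. (\<Sum>i=1..l k. (2 * real k * bias l k \<theta> i) * indicator {q} (bidx l k i))
                + (\<Sum>i=1..l k. \<Sum>j=1..l (k - 1). (2 * wgt l k \<theta> i j) * indicator {q} (widx l k i j)))
        - (\<Sum>i=1..l L. (2 * real L * f0 i) * indicator {q} (bidx l L i)))"
    unfolding Vfun_deriv_def bias_eq_bidx wgt_eq_widx sum_distrib_left by (simp only: ac_simps)
  have swap: "sqerr_deriv l L f \<sigma> \<sigma>' \<theta> (\<lambda>q. indicator {q} p) x = sqerr_deriv l L f \<sigma> \<sigma>' \<theta> (indicator {p}) x"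
    for p :: nat
    by (rule arg_cong[where f = "\<lambda>v. sqerr_deriv l L f \<sigma> \<sigma>' \<theta> v x"]) (auto simp: indicator_def)
  show ?thesis
    unfolding grad
    by (simp only: sqerr_deriv_add sqerr_deriv_diff sqerr_deriv_scale sqerr_deriv_sum finite_atLeastAtMost
        swap Vfun_deriv_def bias_eq_bidx wgt_eq_widx sum_distrib_left ac_simps)
qed

section \<open>Euler identity for ReLU networks\<close>

definition relu_deriv :: "real \<Rightarrow> real" where
  "relu_deriv y = (if 0 < y then 1 else 0)"

lemma relu_deriv_mult_self: "relu_deriv y * y = relu y"
  by (simp add: relu_deriv_def relu_def)

lemma dnetw_relu_Vfun_grad:
  assumes L: "1 \<le> L"
  shows "k \<le> L \<Longrightarrow> i \<in> {1..l k} \<Longrightarrow>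
    dnetw l (\<lambda>_. relu) (\<lambda>_. relu_deriv) \<theta> (\<lambda>q. Vfun_deriv l L f0 \<theta> (indicator {q})) k x i =
      2 * real k * netw l (\<lambda>_. relu) \<theta> k x i - (if k = L then 2 * real L * f0 i else 0)"
proof (induction k arbitrary: i)
  case 0
  then show ?case
    using L by simp
next
  case (Suc k)
  let ?v = "\<lambda>q. Vfun_deriv l L f0 \<theta> (indicator {q})"
  let ?a = "activated l (\<lambda>_. relu) \<theta> k x"
  have k: "Suc k \<in> {1..L}"
    using Suc.prems by simp
  have hidden: "relu_deriv (netw l (\<lambda>_. relu) \<theta> k x j) * dnetw l (\<lambda>_. relu) (\<lambda>_. relu_deriv) \<theta> ?v k x j
      = 2 * real k * ?a j" if "j \<in> {1..l k}" for j
  proof (cases "k = 0")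
    case False
    then show ?thesis
      using Suc.IH[OF _ that] Suc.prems False by (simp add: activated_def relu_deriv_mult_self)
  qed simp
  have "dnetw l (\<lambda>_. relu) (\<lambda>_. relu_deriv) \<theta> ?v (Suc k) x i
      = bias l (Suc k) ?v i + (\<Sum>j=1..l k. wgt l (Suc k) ?v i j * ?a j)
        + (\<Sum>j=1..l k. wgt l (Suc k) \<theta> i j * (2 * real k * ?a j))"
    using hidden by (simp add: affine_def)
  also have "\<dots> = 2 * real (Suc k) * bias l (Suc k) \<theta> i - (if Suc k = L then 2 * real L * f0 i else 0)
        + (\<Sum>j=1..l k. 2 * wgt l (Suc k) \<theta> i j * ?a j) + (\<Sum>j=1..l k. 2 * real k * (wgt l (Suc k) \<theta> i j * ?a j))"
    using Vfun_deriv_indicator_bias[where l = l, OF k Suc.prems(2)] Vfun_deriv_indicator_wgt[where l = l, OF k Suc.prems(2)]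
    by (simp add: bias_eq_bidx[of _ _ ?v] wgt_eq_widx[of _ _ ?v] ac_simps)
  also have "\<dots> = 2 * real (Suc k) * netw l (\<lambda>_. relu) \<theta> (Suc k) x i - (if Suc k = L then 2 * real L * f0 i else 0)"
    by (simp add: netw_Suc affine_def sum_distrib_left sum.distrib[symmetric] algebra_simps)
  finally show ?case .
qed

lemma sqerr_deriv_relu_Vfun_grad:
  assumes "1 \<le> L"
  shows "sqerr_deriv l L f (\<lambda>_. relu) (\<lambda>_. relu_deriv) \<theta> (\<lambda>q. Vfun_deriv l L f0 \<theta> (indicator {q})) x =
    4 * real L * (\<Sum>i=1..l L. (netw l (\<lambda>_. relu) \<theta> L x i - f x i) * (netw l (\<lambda>_. relu) \<theta> L x i - f0 i))"
  unfolding sqerr_deriv_def sum_distrib_left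
  by (intro sum.cong refl) (simp add: dnetw_relu_Vfun_grad[OF assms] algebra_simps)

section \<open>Smooth approximations of ReLU\<close>

lemma eventually_powr_less:
  fixes C \<epsilon> a b :: real
  assumes "a < b" "0 < \<epsilon>"
  shows "eventually (\<lambda>r. C * r powr (- b) < \<epsilon> * r powr (- a)) at_top"
proof -
  have "((\<lambda>r. C / \<epsilon> * r powr (- (b - a))) \<longlongrightarrow> C / \<epsilon> * 0) at_top"
    using assms by (intro tendsto_mult tendsto_const tendsto_neg_powr filterlim_ident) auto
  then have "eventually (\<lambda>r. C / \<epsilon> * r powr (- (b - a)) < 1) at_top"
    by (intro order_tendstoD) auto
  then show ?thesis
    using eventually_gt_at_top[of 0]
  proof eventually_elim
    case (elim r)
    have "r powr (- (b - a)) * r powr (- a) = r powr (- b)"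
      by (subst powr_add[symmetric]) simp
    then have "C * r powr (- b) = (C / \<epsilon> * r powr (- (b - a))) * (\<epsilon> * r powr (- a))"
      using assms by (simp add: field_simps)
    also have "\<dots> < 1 * (\<epsilon> * r powr (- a))"
      using elim assms by (intro mult_strict_right_mono) auto
    finally show ?case
      by simp
  qed
qed

locale relu_approximation =
  fixes A B c :: real and R :: "real \<Rightarrow> real \<Rightarrow> real"
  assumes A_pos: "0 < A" and A_less_B: "A < B"
    and R_C1: "\<And>r. r \<ge> 1 \<Longrightarrow> \<exists>R'. continuous_on UNIV R' \<and> (\<forall>x. (R r has_real_derivative R' x) (at x))"
    and R_low: "\<And>r x. r \<ge> 1 \<Longrightarrow> x \<le> A / r \<Longrightarrow> R r x = 0"
    and R_bnd: "\<And>r y. r \<ge> 1 \<Longrightarrow> 0 \<le> R r y \<and> R r y \<le> max y 0"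
    and R_high: "\<And>r z. r \<ge> 1 \<Longrightarrow> z \<ge> B / r \<Longrightarrow> R r z = z"
    and deriv_R_bound: "\<And>r x. r \<ge> 1 \<Longrightarrow> \<bar>deriv (R r) x\<bar> \<le> c"
begin

lemma R_has_real_derivative: "r \<ge> 1 \<Longrightarrow> (R r has_real_derivative deriv (R r) y) (at y)"
  using R_C1[of r] DERIV_imp_deriv by metis

lemma continuous_deriv_R: "r \<ge> 1 \<Longrightarrow> continuous_on UNIV (deriv (R r))"
  using R_C1[of r] DERIV_imp_deriv by (metis (no_types, lifting) continuous_on_cong)

lemma R_measurable: "r \<ge> 1 \<Longrightarrow> R r \<in> borel_measurable borel"
  by (intro borel_measurable_continuous_onI continuous_at_imp_continuous_on ballI
      DERIV_isCont[OF R_has_real_derivative])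

lemma deriv_R_measurable: "r \<ge> 1 \<Longrightarrow> deriv (R r) \<in> borel_measurable borel"
  by (rule borel_measurable_continuous_onI[OF continuous_deriv_R])

lemma abs_R_le: "r \<ge> 1 \<Longrightarrow> \<bar>R r y\<bar> \<le> \<bar>y\<bar>"
  using R_bnd[of r y] by auto

lemma R_lipschitz: "r \<ge> 1 \<Longrightarrow> \<bar>R r y - R r z\<bar> \<le> c * \<bar>y - z\<bar>"
  using field_differentiable_bound[of UNIV "R r" "deriv (R r)" c y z]
  by (simp add: R_has_real_derivative deriv_R_bound)

lemma R_relu_dist:
  assumes "r \<ge> 1"
  shows "\<bar>R r y - relu y\<bar> \<le> B / r"
proof -
  have "0 < B / r"
    using A_pos A_less_B assms by simp
  then show ?thesis
    using R_bnd[OF assms, of y] R_high[OF assms, of y] by (cases "B / r \<le> y") (auto simp: relu_def)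
qed

lemma deriv_R_above:
  assumes "r \<ge> 1" "B / r < y"
  shows "deriv (R r) y = 1"
proof (rule DERIV_imp_deriv)
  show "(R r has_real_derivative 1) (at y)"
    by (rule has_field_derivative_transform_within_open[where S = "{B / r<..}", OF DERIV_ident])
       (use assms R_high in auto)
qed

lemma deriv_R_below:
  assumes "r \<ge> 1" "y < A / r"
  shows "deriv (R r) y = 0"
proof (rule DERIV_imp_deriv)
  show "(R r has_real_derivative 0) (at y)"
    by (rule has_field_derivative_transform_within_open[where S = "{..<A / r}", OF DERIV_const])
       (use assms R_low in auto)
qed

definition act :: "real \<Rightarrow> nat \<Rightarrow> real \<Rightarrow> real" where
  "act r = (\<lambda>k. R (r powr (1 / real k)))"

definition act_deriv :: "real \<Rightarrow> nat \<Rightarrow> real \<Rightarrow> real" where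
  "act_deriv r = (\<lambda>k. deriv (R (r powr (1 / real k))))"

lemma layer_scale_ge_1: "r \<ge> 1 \<Longrightarrow> 1 \<le> r powr (1 / real k)"
  by (rule ge_one_powr_ge_zero) auto

lemma divide_layer_scale: "r \<ge> 1 \<Longrightarrow> a / r powr (1 / real k) = a * r powr (- (1 / real k))"
  by (simp add: powr_minus divide_inverse)

lemma act_has_real_derivative: "r \<ge> 1 \<Longrightarrow> (act r k has_real_derivative act_deriv r k y) (at y)"
  unfolding act_def act_deriv_def by (rule R_has_real_derivative[OF layer_scale_ge_1])

lemma abs_act_le: "r \<ge> 1 \<Longrightarrow> \<bar>act r k y\<bar> \<le> \<bar>y\<bar>"
  unfolding act_def by (rule abs_R_le[OF layer_scale_ge_1])

lemma abs_act_deriv_le: "r \<ge> 1 \<Longrightarrow> \<bar>act_deriv r k y\<bar> \<le> c"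
  unfolding act_deriv_def by (rule deriv_R_bound[OF layer_scale_ge_1])

lemma act_measurable: "r \<ge> 1 \<Longrightarrow> act r k \<in> borel_measurable borel"
  unfolding act_def by (rule R_measurable[OF layer_scale_ge_1])

lemma act_deriv_measurable: "r \<ge> 1 \<Longrightarrow> act_deriv r k \<in> borel_measurable borel"
  unfolding act_deriv_def by (rule deriv_R_measurable[OF layer_scale_ge_1])

lemma act_relu_dist:
  assumes "r \<ge> 1"
  shows "\<bar>act r k y' - relu y\<bar> \<le> c * \<bar>y' - y\<bar> + B * r powr (- (1 / real k))"
proof -
  have "\<bar>act r k y' - relu y\<bar> \<le> \<bar>act r k y' - act r k y\<bar> + \<bar>act r k y - relu y\<bar>"
    by linarith
  also have "\<dots> \<le> c * \<bar>y' - y\<bar> + B / r powr (1 / real k)"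
    unfolding act_def using assms layer_scale_ge_1
    by (intro add_mono R_lipschitz R_relu_dist) auto
  finally show ?thesis
    using assms by (simp add: divide_layer_scale)
qed

lemma deriv_bound_nonneg: "0 \<le> c"
  using order_trans[OF abs_ge_zero deriv_R_bound[OF order.refl]] .

lemma netw_act_dist_Suc:
  assumes r: "r \<ge> 1" and k: "1 \<le> k"
    and D: "\<And>j. j \<in> {1..l k} \<Longrightarrow> \<bar>netw l (act r) \<theta> k x j - netw l (\<lambda>_. relu) \<theta> k x j\<bar> \<le> D"
  shows "\<bar>netw l (act r) \<theta> (Suc k) x i - netw l (\<lambda>_. relu) \<theta> (Suc k) x i\<bar>
    \<le> (\<Sum>j=1..l k. \<bar>wgt l (Suc k) \<theta> i j\<bar>) * (c * D + B * r powr (- (1 / real k)))"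
proof -
  have diff: "netw l (act r) \<theta> (Suc k) x i - netw l (\<lambda>_. relu) \<theta> (Suc k) x i =
      (\<Sum>j=1..l k. wgt l (Suc k) \<theta> i j * (act r k (netw l (act r) \<theta> k x j) - relu (netw l (\<lambda>_. relu) \<theta> k x j)))"
    using k by (simp add: netw_Suc activated_def affine_def algebra_simps sum_subtractf)
  have "\<bar>\<Sum>j=1..l k. wgt l (Suc k) \<theta> i j * (act r k (netw l (act r) \<theta> k x j) - relu (netw l (\<lambda>_. relu) \<theta> k x j))\<bar>
      \<le> (\<Sum>j=1..l k. \<bar>wgt l (Suc k) \<theta> i j\<bar> * (c * D + B * r powr (- (1 / real k))))"
  proof (intro order.trans[OF sum_abs] sum_mono)
    fix j assume j: "j \<in> {1..l k}"
    have "\<bar>act r k (netw l (act r) \<theta> k x j) - relu (netw l (\<lambda>_. relu) \<theta> k x j)\<bar>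
        \<le> c * \<bar>netw l (act r) \<theta> k x j - netw l (\<lambda>_. relu) \<theta> k x j\<bar> + B * r powr (- (1 / real k))"
      by (rule act_relu_dist[OF r])
    also have "\<dots> \<le> c * D + B * r powr (- (1 / real k))"
      using D[OF j] deriv_bound_nonneg by (intro add_right_mono mult_left_mono)
    finally show "\<bar>wgt l (Suc k) \<theta> i j * (act r k (netw l (act r) \<theta> k x j) - relu (netw l (\<lambda>_. relu) \<theta> k x j))\<bar>
        \<le> \<bar>wgt l (Suc k) \<theta> i j\<bar> * (c * D + B * r powr (- (1 / real k)))"
      unfolding abs_mult by (rule mult_left_mono) simp
  qed
  then show ?thesis
    unfolding diff by (simp add: sum_distrib_right)
qed

text \<open>The first layer is affine, hence the same for all activations; every further layer adds an
  error of order \<open>r powr (- 1 / k)\<close>, where \<open>k\<close> is the index of the previous layer.\<close>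

lemma netw_act_rate:
  "\<exists>C\<ge>0. \<forall>r\<ge>1. \<forall>i\<in>{1..l (Suc k)}. \<bar>netw l (act r) \<theta> (Suc k) x i - netw l (\<lambda>_. relu) \<theta> (Suc k) x i\<bar>
     \<le> C * (if k = 0 then 0 else r powr (- (1 / real k)))"
proof (induction k)
  case (Suc k)
  then obtain C where C: "C \<ge> 0" "\<And>r i. r \<ge> 1 \<Longrightarrow> i \<in> {1..l (Suc k)} \<Longrightarrow>
      \<bar>netw l (act r) \<theta> (Suc k) x i - netw l (\<lambda>_. relu) \<theta> (Suc k) x i\<bar>
      \<le> C * (if k = 0 then 0 else r powr (- (1 / real k)))"
    by blast
  define W where "W = (\<Sum>i=1..l (Suc (Suc k)). \<Sum>j=1..l (Suc k). \<bar>wgt l (Suc (Suc k)) \<theta> i j\<bar>)"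
  have "\<bar>netw l (act r) \<theta> (Suc (Suc k)) x i - netw l (\<lambda>_. relu) \<theta> (Suc (Suc k)) x i\<bar>
      \<le> W * (c * C + B) * r powr (- (1 / real (Suc k)))"
    if r: "r \<ge> 1" and i: "i \<in> {1..l (Suc (Suc k))}" for r i
  proof -
    have previous: "\<bar>netw l (act r) \<theta> (Suc k) x j - netw l (\<lambda>_. relu) \<theta> (Suc k) x j\<bar>
        \<le> C * r powr (- (1 / real (Suc k)))" if j: "j \<in> {1..l (Suc k)}" for j
    proof -
      have "C * (if k = 0 then 0 else r powr (- (1 / real k))) \<le> C * r powr (- (1 / real (Suc k)))"
        using r C(1) by (intro mult_left_mono) (auto intro!: powr_mono simp: field_simps)
      with C(2)[OF r j] show ?thesis
        by linarith
    qed
    have "\<bar>netw l (act r) \<theta> (Suc (Suc k)) x i - netw l (\<lambda>_. relu) \<theta> (Suc (Suc k)) x i\<bar>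
        \<le> (\<Sum>j=1..l (Suc k). \<bar>wgt l (Suc (Suc k)) \<theta> i j\<bar>)
           * (c * (C * r powr (- (1 / real (Suc k)))) + B * r powr (- (1 / real (Suc k))))"
      by (rule netw_act_dist_Suc[OF r _ previous]) simp_all
    also have "\<dots> = (\<Sum>j=1..l (Suc k). \<bar>wgt l (Suc (Suc k)) \<theta> i j\<bar>) * ((c * C + B) * r powr (- (1 / real (Suc k))))"
      by (simp add: algebra_simps)
    also have "\<dots> \<le> W * ((c * C + B) * r powr (- (1 / real (Suc k))))"
      unfolding W_def using i deriv_bound_nonneg C(1) A_pos A_less_B
      by (intro mult_right_mono member_le_sum[where f = "\<lambda>i. \<Sum>j=1..l (Suc k). \<bar>wgt l (Suc (Suc k)) \<theta> i j\<bar>"])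
         (auto intro: sum_nonneg)
    finally show ?thesis
      by (simp add: mult.assoc)
  qed
  moreover have "0 \<le> W * (c * C + B)"
    unfolding W_def using deriv_bound_nonneg C(1) A_pos A_less_B
    by (intro mult_nonneg_nonneg sum_nonneg add_nonneg_nonneg) auto
  ultimately show ?case
    by (intro exI[of _ "W * (c * C + B)"]) simp
qed (intro exI[of _ 0], simp)

lemma eventually_netw_act_close:
  assumes k: "1 \<le> k" and i: "i \<in> {1..l k}" and \<epsilon>: "0 < \<epsilon>"
  shows "eventually (\<lambda>r. \<bar>netw l (act r) \<theta> k x i - netw l (\<lambda>_. relu) \<theta> k x i\<bar> < \<epsilon> * r powr (- (1 / real k))) at_top"
proof -
  obtain k' where k': "k = Suc k'"
    using k by (cases k) auto
  obtain C where C: "\<And>r. r \<ge> 1 \<Longrightarrow> \<bar>netw l (act r) \<theta> k x i - netw l (\<lambda>_. relu) \<theta> k x i\<bar>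
      \<le> C * (if k' = 0 then 0 else r powr (- (1 / real k')))"
    using netw_act_rate[where l = l and \<theta> = \<theta> and k = k' and x = x] i k' by blast
  have "eventually (\<lambda>r. C * (if k' = 0 then 0 else r powr (- (1 / real k'))) < \<epsilon> * r powr (- (1 / real k))) at_top"
  proof (cases "k' = 0")
    case True
    show ?thesis
      using eventually_gt_at_top[of 0] by eventually_elim (use True \<epsilon> in simp)
  next
    case False
    then show ?thesis
      using eventually_powr_less[of "1 / real k" "1 / real k'" \<epsilon> C] \<epsilon> by (simp add: k' field_simps)
  qed
  then show ?thesis
    using eventually_ge_at_top[of 1] by eventually_elim (use C in fastforce)
qed

lemma layer_scale_tendsto_zero: "1 \<le> k \<Longrightarrow> ((\<lambda>r. r powr (- (1 / real k))) \<longlongrightarrow> 0) at_top"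
  by (intro tendsto_neg_powr filterlim_ident) auto

lemma netw_act_tendsto:
  assumes "1 \<le> k" "i \<in> {1..l k}"
  shows "((\<lambda>r. netw l (act r) \<theta> k x i) \<longlongrightarrow> netw l (\<lambda>_. relu) \<theta> k x i) at_top"
proof -
  have "((\<lambda>r. netw l (act r) \<theta> k x i - netw l (\<lambda>_. relu) \<theta> k x i) \<longlongrightarrow> 0) at_top"
  proof (rule Lim_null_comparison)
    show "eventually (\<lambda>r. norm (netw l (act r) \<theta> k x i - netw l (\<lambda>_. relu) \<theta> k x i) \<le> 1 * r powr (- (1 / real k))) at_top"
      using eventually_netw_act_close[where l = l and \<theta> = \<theta> and x = x, OF assms zero_less_one] by eventually_elim simp
    show "((\<lambda>r. 1 * r powr (- (1 / real k))) \<longlongrightarrow> 0) at_top"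
      using layer_scale_tendsto_zero[OF assms(1)] by simp
  qed
  then show ?thesis
    by (simp add: LIM_zero_iff)
qed

lemma act_netw_tendsto:
  assumes "1 \<le> k" "i \<in> {1..l k}"
  shows "((\<lambda>r. act r k (netw l (act r) \<theta> k x i)) \<longlongrightarrow> relu (netw l (\<lambda>_. relu) \<theta> k x i)) at_top"
proof -
  let ?d = "\<lambda>r. \<bar>netw l (act r) \<theta> k x i - netw l (\<lambda>_. relu) \<theta> k x i\<bar>"
  have "((\<lambda>r. act r k (netw l (act r) \<theta> k x i) - relu (netw l (\<lambda>_. relu) \<theta> k x i)) \<longlongrightarrow> 0) at_top"
  proof (rule Lim_null_comparison)
    show "eventually (\<lambda>r. norm (act r k (netw l (act r) \<theta> k x i) - relu (netw l (\<lambda>_. relu) \<theta> k x i))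
        \<le> c * ?d r + B * r powr (- (1 / real k))) at_top"
      using eventually_ge_at_top[of 1] by eventually_elim (simp add: act_relu_dist)
    have "((\<lambda>r. c * ?d r + B * r powr (- (1 / real k))) \<longlongrightarrow> c * \<bar>0\<bar> + B * 0) at_top"
      using netw_act_tendsto[where l = l, OF assms] layer_scale_tendsto_zero[OF assms(1)]
      by (intro tendsto_intros) (simp_all add: LIM_zero_iff)
    then show "((\<lambda>r. c * ?d r + B * r powr (- (1 / real k))) \<longlongrightarrow> 0) at_top"
      by simp
  qed
  then show ?thesis
    by (simp add: LIM_zero_iff)
qed

lemma eventually_act_deriv_netw:
  assumes k: "1 \<le> k" and i: "i \<in> {1..l k}"
  shows "eventually (\<lambda>r. act_deriv r k (netw l (act r) \<theta> k x i) = relu_deriv (netw l (\<lambda>_. relu) \<theta> k x i)) at_top"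
proof -
  let ?y = "netw l (\<lambda>_. relu) \<theta> k x i" and ?p = "\<lambda>r. r powr (- (1 / real k))"
  have close: "eventually (\<lambda>r. \<bar>netw l (act r) \<theta> k x i - ?y\<bar> < A * ?p r) at_top"
    using eventually_netw_act_close[where l = l, OF k i A_pos] .
  show ?thesis
  proof (cases "0 < ?y")
    case True
    have "((\<lambda>r. (A + B) * ?p r) \<longlongrightarrow> (A + B) * 0) at_top"
      by (intro tendsto_mult tendsto_const layer_scale_tendsto_zero k)
    then have "eventually (\<lambda>r. (A + B) * ?p r < ?y) at_top"
      using True by (intro order_tendstoD) auto
    then show ?thesis
      using close eventually_ge_at_top[of 1]
    proof eventually_elim
      case (elim r)
      then have "B / r powr (1 / real k) < netw l (act r) \<theta> k x i"
        by (simp add: divide_layer_scale algebra_simps)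
      then show ?case
        using True elim(3) by (simp add: act_deriv_def relu_deriv_def deriv_R_above layer_scale_ge_1)
    qed
  next
    case False
    show ?thesis
      using close eventually_ge_at_top[of 1]
    proof eventually_elim
      case (elim r)
      then have "netw l (act r) \<theta> k x i < A / r powr (1 / real k)"
        using False by (simp add: divide_layer_scale)
      then show ?case
        using False elim(2) by (simp add: act_deriv_def relu_deriv_def deriv_R_below layer_scale_ge_1)
    qed
  qed
qed

lemma activated_act_tendsto:
  assumes "j \<in> {1..l k}"
  shows "((\<lambda>r. activated l (act r) \<theta> k x j) \<longlongrightarrow> activated l (\<lambda>_. relu) \<theta> k x j) at_top"
  using act_netw_tendsto[where k = k and i = j and l = l and \<theta> = \<theta> and x = x] assms by (cases "k = 0") (simp_all add: activated_def)

lemma dnetw_act_tendsto: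
  "((\<lambda>r. dnetw l (act r) (act_deriv r) \<theta> v k x i) \<longlongrightarrow> dnetw l (\<lambda>_. relu) (\<lambda>_. relu_deriv) \<theta> v k x i) at_top"
proof (induction k arbitrary: i)
  case (Suc k)
  have hidden: "((\<lambda>r. act_deriv r k (netw l (act r) \<theta> k x j) * dnetw l (act r) (act_deriv r) \<theta> v k x j) \<longlongrightarrow>
      relu_deriv (netw l (\<lambda>_. relu) \<theta> k x j) * dnetw l (\<lambda>_. relu) (\<lambda>_. relu_deriv) \<theta> v k x j) at_top"
    if j: "j \<in> {1..l k}" for j
  proof (cases "k = 0")
    case False
    then show ?thesis
      using tendsto_eventually[OF eventually_act_deriv_netw[where k = k and i = j and l = l and \<theta> = \<theta> and x = x]] j
      by (intro tendsto_mult Suc.IH) auto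
  qed simp
  show ?case
    by (simp add: affine_def)
       (intro tendsto_add tendsto_const tendsto_sum tendsto_mult_left activated_act_tendsto hidden; simp)
qed simp

lemma sqerr_deriv_act_tendsto:
  assumes "1 \<le> L"
  shows "((\<lambda>r. sqerr_deriv l L f (act r) (act_deriv r) \<theta> v x) \<longlongrightarrow> sqerr_deriv l L f (\<lambda>_. relu) (\<lambda>_. relu_deriv) \<theta> v x) at_top"
  unfolding sqerr_deriv_def using assms
  by (intro tendsto_intros netw_act_tendsto dnetw_act_tendsto) auto

end

section \<open>The limit of the gradients\<close>

locale relu_network_training = relu_approximation A B c R
  for A B c :: real and R :: "real \<Rightarrow> real \<Rightarrow> real" +
  fixes L :: nat and l :: "nat \<Rightarrow> nat" and a b :: real
    and \<mu> :: "(nat \<Rightarrow> real) measure" and f :: "(nat \<Rightarrow> real) \<Rightarrow> nat \<Rightarrow> real"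
  assumes L_pos: "1 \<le> L"
    and mu_sets: "sets \<mu> = sets (PiM {1..l 0} (\<lambda>_. restrict_space lborel {a..b}))"
    and mu_fin: "finite_measure \<mu>"
    and f_meas: "\<And>i. i \<in> {1..l L} \<Longrightarrow> (\<lambda>x. f x i) \<in> borel_measurable \<mu>"
    and loss_int: "\<And>r \<theta>. r \<ge> 1 \<Longrightarrow> integrable \<mu> (sqerr l L (netR l R r \<theta> L) f)"
    and loss_int_inf: "\<And>\<theta>. integrable \<mu> (sqerr l L (netInf l \<theta> L) f)"
begin

lemma space_mu: "space \<mu> = PiE {1..l 0} (\<lambda>_. {a..b})"
  using sets_eq_imp_space_eq[OF mu_sets] by (simp add: space_PiM space_restrict_space)

lemma abs_input_le: "x \<in> space \<mu> \<Longrightarrow> \<forall>j\<in>{1..l 0}. \<bar>x j\<bar> \<le> max \<bar>a\<bar> \<bar>b\<bar>"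
  by (auto simp: space_mu PiE_iff)

lemma input_measurable:
  assumes "j \<in> {1..l 0}"
  shows "(\<lambda>x. x j) \<in> borel_measurable \<mu>"
proof -
  have "(\<lambda>x. x) \<in> borel_measurable (restrict_space lborel {a..b})"
    by (intro measurable_restrict_space1) simp
  then have "(\<lambda>x. x j) \<in> borel_measurable (PiM {1..l 0} (\<lambda>_. restrict_space lborel {a..b}))"
    using measurable_compose[OF measurable_component_singleton[OF assms]] by simp
  then show ?thesis
    using measurable_cong_sets[OF mu_sets refl] by blast
qed

lemma f_integrable:
  assumes i: "i \<in> {1..l L}"
  shows "integrable \<mu> (\<lambda>x. f x i)"
proof -
  interpret finite_measure \<mu>
    by (rule mu_fin)
  txt \<open>The loss at the zero parameter is the integral of \<open>\<Sum>m. (f x m)\<^sup>2\<close>.\<close>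
  have "netInf l (\<lambda>_. 0) L x m = 0" for x m
    using L_pos by (cases L) (simp_all add: netInf_def netw_Suc affine_def bias_def wgt_def)
  then have "sqerr l L (netInf l (\<lambda>_. 0) L) f = (\<lambda>x. \<Sum>m=1..l L. (f x m)\<^sup>2)"
    by (simp add: sqerr_def fun_eq_iff)
  then have "integrable \<mu> (\<lambda>x. \<Sum>m=1..l L. (f x m)\<^sup>2)"
    using loss_int_inf[of "\<lambda>_. 0"] by simp
  then have "integrable \<mu> (\<lambda>x. (f x i)\<^sup>2)"
    by (rule Bochner_Integration.integrable_bound)
       (use f_meas[OF i] i in \<open>auto intro!: AE_I2 order_trans[OF member_le_sum abs_ge_self]\<close>)
  then have int: "integrable \<mu> (\<lambda>x. 1 + (f x i)\<^sup>2)"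
    by simp
  have "\<bar>y\<bar> \<le> 1 + y\<^sup>2" for y :: real
  proof (cases "\<bar>y\<bar> \<le> 1")
    case False
    then have "\<bar>y\<bar> * 1 \<le> \<bar>y\<bar> * \<bar>y\<bar>"
      by (intro mult_left_mono) auto
    then show ?thesis
      by (simp add: power2_eq_square)
  qed (use zero_le_power2[of y] in linarith)
  then show ?thesis
    by (intro Bochner_Integration.integrable_bound[OF int f_meas[OF i]]) auto
qed

lemma sqerr_deriv_measurable:
  assumes "\<And>m. \<sigma> m \<in> borel_measurable borel" "\<And>m. \<sigma>' m \<in> borel_measurable borel"
  shows "sqerr_deriv l L f \<sigma> \<sigma>' \<theta> v \<in> borel_measurable \<mu>"
proof -
  obtain L' where L': "L = Suc L'"
    using L_pos by (cases L) auto
  show ?thesis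
    unfolding sqerr_deriv_def L'
    using netw_measurable[OF input_measurable assms(1)] dnetw_measurable[OF input_measurable assms] f_meas
    by (auto simp: L')
qed

definition sqerr_deriv_majorant :: "real \<Rightarrow> real \<Rightarrow> real \<Rightarrow> (nat \<Rightarrow> real) \<Rightarrow> real" where
  "sqerr_deriv_majorant M c' V x =
     (\<Sum>m=1..l L. 2 * (netw_bound l M (max \<bar>a\<bar> \<bar>b\<bar>) L + \<bar>f x m\<bar>) * dnetw_bound l M (max \<bar>a\<bar> \<bar>b\<bar>) c' V L)"

lemma integrable_sqerr_deriv_dom: "integrable \<mu> (sqerr_deriv_majorant M c' V)"
proof -
  interpret finite_measure \<mu>
    by (rule mu_fin)
  show ?thesis
    unfolding sqerr_deriv_majorant_def
    by (intro Bochner_Integration.integrable_sum integrable_mult_left integrable_mult_right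
        Bochner_Integration.integrable_add integrable_const integrable_abs f_integrable)
qed

lemma abs_sqerr_deriv_le:
  assumes x: "x \<in> space \<mu>" and \<theta>: "\<forall>q\<in>{1..dsum l L}. \<bar>\<theta> q\<bar> \<le> M" and v: "\<forall>q\<in>{1..dsum l L}. \<bar>v q\<bar> \<le> V"
    and \<sigma>: "\<And>m y. \<bar>\<sigma> m y\<bar> \<le> \<bar>y\<bar>" and \<sigma>': "\<And>m y. \<bar>\<sigma>' m y\<bar> \<le> c'"
  shows "\<bar>sqerr_deriv l L f \<sigma> \<sigma>' \<theta> v x\<bar> \<le> sqerr_deriv_majorant M c' V x"
  unfolding sqerr_deriv_def sqerr_deriv_majorant_def
proof (intro order.trans[OF sum_abs] sum_mono)
  fix m assume m: "m \<in> {1..l L}"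
  note bounds = \<theta> abs_input_le[OF x] \<sigma>
  have n: "\<bar>netw l \<sigma> \<theta> L x m - f x m\<bar> \<le> netw_bound l M (max \<bar>a\<bar> \<bar>b\<bar>) L + \<bar>f x m\<bar>"
    using netw_bound[where \<sigma> = \<sigma>, OF bounds L_pos order.refl m] by linarith
  have d: "\<bar>dnetw l \<sigma> \<sigma>' \<theta> v L x m\<bar> \<le> dnetw_bound l M (max \<bar>a\<bar> \<bar>b\<bar>) c' V L"
    using dnetw_bound[where \<sigma> = \<sigma> and \<sigma>' = \<sigma>', OF bounds v \<sigma>' order.refl m] .
  show "\<bar>2 * (netw l \<sigma> \<theta> L x m - f x m) * dnetw l \<sigma> \<sigma>' \<theta> v L x m\<bar>
      \<le> 2 * (netw_bound l M (max \<bar>a\<bar> \<bar>b\<bar>) L + \<bar>f x m\<bar>) * dnetw_bound l M (max \<bar>a\<bar> \<bar>b\<bar>) c' V L"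
  proof -
    have "\<bar>netw l \<sigma> \<theta> L x m - f x m\<bar> * \<bar>dnetw l \<sigma> \<sigma>' \<theta> v L x m\<bar>
        \<le> (netw_bound l M (max \<bar>a\<bar> \<bar>b\<bar>) L + \<bar>f x m\<bar>) * dnetw_bound l M (max \<bar>a\<bar> \<bar>b\<bar>) c' V L"
      by (rule mult_mono[OF n d order_trans[OF abs_ge_zero n] abs_ge_zero])
    then show ?thesis
      by (simp only: abs_mult abs_numeral mult.assoc mult_le_cancel_left_pos zero_less_numeral)
  qed
qed

lemma abs_add_indicator_le:
  fixes \<theta> :: "'a \<Rightarrow> real"
  assumes "finite P" "p \<in> P" "\<bar>t\<bar> \<le> 1"
  shows "\<bar>\<theta> p + t * indicator {q} p\<bar> \<le> (\<Sum>p\<in>P. \<bar>\<theta> p\<bar>) + 1"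
proof -
  have "\<bar>\<theta> p + t * indicator {q} p\<bar> \<le> \<bar>\<theta> p\<bar> + \<bar>t\<bar> * indicator {q} p"
    using abs_triangle_ineq[of "\<theta> p" "t * indicator {q} p"] by (simp add: abs_mult)
  also have "\<dots> \<le> (\<Sum>p\<in>P. \<bar>\<theta> p\<bar>) + 1 * 1"
    using assms by (intro add_mono mult_mono member_le_sum) (auto simp: indicator_def)
  finally show ?thesis
    by simp
qed

lemma grad_lossR:
  assumes r: "r \<ge> 1"
  shows "grad (lossR l L R \<mu> f r) \<theta> q = (\<integral>x. sqerr_deriv l L f (act r) (act_deriv r) \<theta> (indicator {q}) x \<partial>\<mu>)"
proof -
  define \<theta>' where "\<theta>' t = (\<lambda>p. \<theta> p + t * indicator {q} p)" for t
  have loss: "lossR l L R \<mu> f r (\<theta>(q := \<theta> q + t)) = (\<integral>x. sqerr l L (netw l (act r) (\<theta>' t) L) f x \<partial>\<mu>)" for t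
  proof -
    have "\<theta>(q := \<theta> q + t) = \<theta>' t"
      by (auto simp: \<theta>'_def)
    then show ?thesis
      by (simp add: lossR_def netR_def act_def)
  qed
  have "((\<lambda>t. \<integral>x. sqerr l L (netw l (act r) (\<theta>' t) L) f x \<partial>\<mu>) has_real_derivative
      (\<integral>x. sqerr_deriv l L f (act r) (act_deriv r) (\<theta>' 0) (indicator {q}) x \<partial>\<mu>)) (at 0)"
  proof (rule has_real_derivative_integral)
    show "integrable \<mu> (\<lambda>x. sqerr l L (netw l (act r) (\<theta>' t) L) f x)" for t
      using loss_int[OF r, of "\<theta>' t"] by (simp add: netR_def act_def)
    show "((\<lambda>s. sqerr l L (netw l (act r) (\<theta>' s) L) f x) has_real_derivative
        sqerr_deriv l L f (act r) (act_deriv r) (\<theta>' t) (indicator {q}) x) (at t)" for x t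
      unfolding \<theta>'_def by (rule sqerr_has_real_derivative[OF act_has_real_derivative[OF r]])
    show "sqerr_deriv l L f (act r) (act_deriv r) (\<theta>' 0) (indicator {q}) \<in> borel_measurable \<mu>"
      by (intro sqerr_deriv_measurable act_measurable act_deriv_measurable r)
    show "\<bar>sqerr_deriv l L f (act r) (act_deriv r) (\<theta>' t) (indicator {q}) x\<bar>
        \<le> sqerr_deriv_majorant ((\<Sum>p=1..dsum l L. \<bar>\<theta> p\<bar>) + 1) c 1 x"
      if "x \<in> space \<mu>" "\<bar>t\<bar> \<le> 1" for x t
    proof (rule abs_sqerr_deriv_le[OF that(1)])
      show "\<forall>p\<in>{1..dsum l L}. \<bar>\<theta>' t p\<bar> \<le> (\<Sum>p=1..dsum l L. \<bar>\<theta> p\<bar>) + 1"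
        unfolding \<theta>'_def using that(2) by (auto intro: abs_add_indicator_le)
    qed (simp_all add: abs_act_le abs_act_deriv_le r indicator_abs_le_1)
  qed (rule integrable_sqerr_deriv_dom)
  moreover have "\<theta>' 0 = \<theta>"
    by (simp add: \<theta>'_def)
  ultimately show ?thesis
    unfolding grad_def loss by (simp add: DERIV_imp_deriv)
qed

lemma grad_lossR_tendsto:
  "((\<lambda>r. grad (lossR l L R \<mu> f r) \<theta> q) \<longlongrightarrow>
     (\<integral>x. sqerr_deriv l L f (\<lambda>_. relu) (\<lambda>_. relu_deriv) \<theta> (indicator {q}) x \<partial>\<mu>)) at_top"
proof -
  txt \<open>Dominated convergence needs measurable integrands for all \<open>r\<close>, but \<open>R r\<close> is only
    constrained for \<open>r \<ge> 1\<close>.\<close>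
  let ?s = "\<lambda>r. sqerr_deriv l L f (act (max 1 r)) (act_deriv (max 1 r)) \<theta> (indicator {q})"
  have lim: "((\<lambda>r. \<integral>x. ?s r x \<partial>\<mu>) \<longlongrightarrow> (\<integral>x. sqerr_deriv l L f (\<lambda>_. relu) (\<lambda>_. relu_deriv) \<theta> (indicator {q}) x \<partial>\<mu>)) at_top"
  proof (rule integral_dominated_convergence_at_top[OF _ _ integrable_sqerr_deriv_dom[of "\<Sum>p=1..dsum l L. \<bar>\<theta> p\<bar>" c 1]])
    show "sqerr_deriv l L f (\<lambda>_. relu) (\<lambda>_. relu_deriv) \<theta> (indicator {q}) \<in> borel_measurable \<mu>"
      by (rule sqerr_deriv_measurable) (simp_all add: relu_def[abs_def] relu_deriv_def[abs_def])
    show "?s r \<in> borel_measurable \<mu>" for r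
      by (intro sqerr_deriv_measurable act_measurable act_deriv_measurable) simp_all
    show "AE x in \<mu>. ((\<lambda>r. ?s r x) \<longlongrightarrow> sqerr_deriv l L f (\<lambda>_. relu) (\<lambda>_. relu_deriv) \<theta> (indicator {q}) x) at_top"
    proof (rule AE_I2)
      fix x
      have "eventually (\<lambda>r. sqerr_deriv l L f (act r) (act_deriv r) \<theta> (indicator {q}) x = ?s r x) at_top"
        using eventually_ge_at_top[of 1] by eventually_elim (simp add: max_absorb2)
      then show "((\<lambda>r. ?s r x) \<longlongrightarrow> sqerr_deriv l L f (\<lambda>_. relu) (\<lambda>_. relu_deriv) \<theta> (indicator {q}) x) at_top"
        by (rule tendsto_cong[THEN iffD1, OF _ sqerr_deriv_act_tendsto[OF L_pos]])
    qed
    show "\<forall>\<^sub>F r in at_top. AE x in \<mu>. norm (?s r x) \<le> sqerr_deriv_majorant (\<Sum>p=1..dsum l L. \<bar>\<theta> p\<bar>) c 1 x"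
      by (intro always_eventually allI AE_I2, unfold real_norm_def, rule abs_sqerr_deriv_le)
         (auto simp: abs_act_le abs_act_deriv_le intro: member_le_sum)
  qed
  have "eventually (\<lambda>r. (\<integral>x. ?s r x \<partial>\<mu>) = grad (lossR l L R \<mu> f r) \<theta> q) at_top"
    using eventually_ge_at_top[of 1] by eventually_elim (simp add: grad_lossR max_absorb2)
  from tendsto_cong[OF this, THEN iffD1, OF lim] show ?thesis .
qed

lemma G_eq_integral:
  assumes G_def: "\<And>\<theta>. (\<forall>i\<in>{1..dsum l L}. \<exists>v. ((\<lambda>r. grad (lossR l L R \<mu> f r) \<theta> i) \<longlongrightarrow> v) at_top) \<Longrightarrow>
      (\<forall>i\<in>{1..dsum l L}. ((\<lambda>r. grad (lossR l L R \<mu> f r) \<theta> i) \<longlongrightarrow> G \<theta> i) at_top)"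
    and q: "q \<in> {1..dsum l L}"
  shows "G \<theta> q = (\<integral>x. sqerr_deriv l L f (\<lambda>_. relu) (\<lambda>_. relu_deriv) \<theta> (indicator {q}) x \<partial>\<mu>)"
proof -
  have "((\<lambda>r. grad (lossR l L R \<mu> f r) \<theta> q) \<longlongrightarrow> G \<theta> q) at_top"
    using G_def[of \<theta>] grad_lossR_tendsto q by blast
  from tendsto_unique[OF _ this grad_lossR_tendsto] show ?thesis
    by simp
qed

lemma integrable_sqerr_deriv_relu: "integrable \<mu> (sqerr_deriv l L f (\<lambda>_. relu) (\<lambda>_. relu_deriv) \<theta> v)"
proof (rule Bochner_Integration.integrable_bound[OF integrable_sqerr_deriv_dom])
  show "sqerr_deriv l L f (\<lambda>_. relu) (\<lambda>_. relu_deriv) \<theta> v \<in> borel_measurable \<mu>"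
    by (rule sqerr_deriv_measurable) (simp_all add: relu_def[abs_def] relu_deriv_def[abs_def])
  show "AE x in \<mu>. norm (sqerr_deriv l L f (\<lambda>_. relu) (\<lambda>_. relu_deriv) \<theta> v x)
      \<le> norm (sqerr_deriv_majorant (\<Sum>p=1..dsum l L. \<bar>\<theta> p\<bar>) 1 (\<Sum>p=1..dsum l L. \<bar>v p\<bar>) x)"
  proof (rule AE_I2)
    fix x assume "x \<in> space \<mu>"
    then have "\<bar>sqerr_deriv l L f (\<lambda>_. relu) (\<lambda>_. relu_deriv) \<theta> v x\<bar>
        \<le> sqerr_deriv_majorant (\<Sum>p=1..dsum l L. \<bar>\<theta> p\<bar>) 1 (\<Sum>p=1..dsum l L. \<bar>v p\<bar>) x"
      by (rule abs_sqerr_deriv_le) (auto simp: relu_def relu_deriv_def intro: member_le_sum)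
    then show "norm (sqerr_deriv l L f (\<lambda>_. relu) (\<lambda>_. relu_deriv) \<theta> v x)
        \<le> norm (sqerr_deriv_majorant (\<Sum>p=1..dsum l L. \<bar>\<theta> p\<bar>) 1 (\<Sum>p=1..dsum l L. \<bar>v p\<bar>) x)"
      by simp
  qed
qed

lemma Vfun_deriv_G:
  assumes G_def: "\<And>\<theta>. (\<forall>i\<in>{1..dsum l L}. \<exists>v. ((\<lambda>r. grad (lossR l L R \<mu> f r) \<theta> i) \<longlongrightarrow> v) at_top) \<Longrightarrow>
      (\<forall>i\<in>{1..dsum l L}. ((\<lambda>r. grad (lossR l L R \<mu> f r) \<theta> i) \<longlongrightarrow> G \<theta> i) at_top)"
  shows "Vfun_deriv l L f0 \<theta> (G \<theta>) =
    4 * real L * (\<integral>x. (\<Sum>i=1..l L. (netInf l \<theta> L x i - f x i) * (netInf l \<theta> L x i - f0 i)) \<partial>\<mu>)"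
proof -
  let ?D = "\<lambda>v. sqerr_deriv l L f (\<lambda>_. relu) (\<lambda>_. relu_deriv) \<theta> v"
  have "Vfun_deriv l L f0 \<theta> (G \<theta>) = Vfun_deriv l L f0 \<theta> (\<lambda>p. \<integral>x. ?D (indicator {p}) x \<partial>\<mu>)"
    by (rule Vfun_deriv_cong) (rule G_eq_integral[OF G_def])
  also have "\<dots> = (\<integral>x. Vfun_deriv l L f0 \<theta> (\<lambda>p. ?D (indicator {p}) x) \<partial>\<mu>)"
    by (rule has_bochner_integral_integral_eq[symmetric])
       (intro has_bochner_integral_Vfun_deriv integrable_sqerr_deriv_relu)
  also have "\<dots> = (\<integral>x. ?D (\<lambda>q. Vfun_deriv l L f0 \<theta> (indicator {q})) x \<partial>\<mu>)"
    by (simp add: sqerr_deriv_Vfun_grad)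
  also have "\<dots> = 4 * real L * (\<integral>x. (\<Sum>i=1..l L. (netInf l \<theta> L x i - f x i) * (netInf l \<theta> L x i - f0 i)) \<partial>\<mu>)"
    by (simp add: sqerr_deriv_relu_Vfun_grad[OF L_pos] netInf_def)
  finally show ?thesis .
qed

end

theorem proposition3p4:
  fixes L :: nat and l :: "nat \<Rightarrow> nat" and a b A B T :: real
    and R :: "real \<Rightarrow> real \<Rightarrow> real"
    and \<mu> :: "(nat \<Rightarrow> real) measure"
    and f :: "(nat \<Rightarrow> real) \<Rightarrow> nat \<Rightarrow> real"
    and G :: "(nat \<Rightarrow> real) \<Rightarrow> nat \<Rightarrow> real"
    and \<Theta> :: "real \<Rightarrow> nat \<Rightarrow> real"
  assumes L_pos: "L \<ge> 1"
    and l_pos: "\<And>k. l k \<ge> 1"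
    and ab: "a < b"
    and AB: "0 < A" "A < B"
    and R_C1: "\<And>r. r \<ge> 1 \<Longrightarrow> \<exists>R'. continuous_on UNIV R' \<and>
                  (\<forall>x. (R r has_real_derivative R' x) (at x))"
    and R_low: "\<And>r x. r \<ge> 1 \<Longrightarrow> x \<le> A / r \<Longrightarrow> R r x = 0"
    and R_bnd: "\<And>r y. r \<ge> 1 \<Longrightarrow> 0 \<le> R r y \<and> R r y \<le> max y 0"
    and R_high: "\<And>r z. r \<ge> 1 \<Longrightarrow> z \<ge> B / r \<Longrightarrow> R r z = z"
    and R_deriv_bdd: "\<exists>c. \<forall>r\<ge>1. \<forall>x. \<bar>deriv (R r) x\<bar> \<le> c"
    and mu_sets: "sets \<mu> = sets (PiM {1..l 0} (\<lambda>_. restrict_space lborel {a..b}))"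
    and mu_fin: "finite_measure \<mu>"
    and f_meas: "\<And>i. i \<in> {1..l L} \<Longrightarrow> (\<lambda>x. f x i) \<in> borel_measurable \<mu>"
    and loss_int: "\<And>r \<theta>. r \<ge> 1 \<Longrightarrow> integrable \<mu> (sqerr l L (netR l R r \<theta> L) f)"
    and loss_int_inf: "\<And>\<theta>. integrable \<mu> (sqerr l L (netInf l \<theta> L) f)"
    and G_def: "\<And>\<theta>. (\<forall>i\<in>{1..dsum l L}.
                     \<exists>v. ((\<lambda>r. grad (lossR l L R \<mu> f r) \<theta> i) \<longlongrightarrow> v) at_top) \<Longrightarrow>
                  (\<forall>i\<in>{1..dsum l L}.
                     ((\<lambda>r. grad (lossR l L R \<mu> f r) \<theta> i) \<longlongrightarrow> G \<theta> i) at_top)"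
    and T_pos: "T > 0"
    and Theta_cont: "\<And>i. i \<in> {1..dsum l L} \<Longrightarrow> continuous_on {0..T} (\<lambda>s. \<Theta> s i)"
    and Theta_ode: "\<And>t i. t \<in> {0..T} \<Longrightarrow> i \<in> {1..dsum l L} \<Longrightarrow>
                  set_integrable lborel {0..t} (\<lambda>s. G (\<Theta> s) i) \<and>
                  \<Theta> t i = \<Theta> 0 i - (LINT s:{0..t}|lborel. G (\<Theta> s) i)"
  shows "\<forall>t\<in>{0..T}.
           Vfun l L (f (\<lambda>i\<in>{1..l 0}. 0)) (\<Theta> t) =
           Vfun l L (f (\<lambda>i\<in>{1..l 0}. 0)) (\<Theta> 0)
           - 4 * real L * (LINT s:{0..t}|lborel.
                (\<integral>x. (\<Sum>i=1..l L. (netInf l (\<Theta> s) L x i - f x i)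
                          * (netInf l (\<Theta> s) L x i - f (\<lambda>i\<in>{1..l 0}. 0) i)) \<partial>\<mu>))"
proof -
  obtain c where c: "\<And>r x. r \<ge> 1 \<Longrightarrow> \<bar>deriv (R r) x\<bar> \<le> c"
    using R_deriv_bdd by blast
  interpret relu_network_training A B c R L l a b \<mu> f
    by (rule relu_network_training.intro[OF relu_approximation.intro[OF AB R_C1 R_low R_bnd R_high c]
          relu_network_training_axioms.intro[OF L_pos mu_sets mu_fin f_meas loss_int loss_int_inf]])
  let ?f0 = "f (\<lambda>i\<in>{1..l 0}. 0)"
  have D: "decreases_by_integral T (\<lambda>t. Vfun l L ?f0 (\<Theta> t)) (\<lambda>s. Vfun_deriv l L ?f0 (\<Theta> s) (G (\<Theta> s)))"
    by (intro Vfun_decreases_by_integral L_pos) (unfold decreases_by_integral_def, use Theta_ode in blast)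
  have rate: "Vfun_deriv l L ?f0 (\<Theta> s) (G (\<Theta> s)) =
      4 * real L * (\<integral>x. (\<Sum>i=1..l L. (netInf l (\<Theta> s) L x i - f x i) * (netInf l (\<Theta> s) L x i - ?f0 i)) \<partial>\<mu>)" for s
    by (rule Vfun_deriv_G[OF G_def])
  show ?thesis
  proof
    fix t assume "t \<in> {0..T}"
    then have "Vfun l L ?f0 (\<Theta> t) = Vfun l L ?f0 (\<Theta> 0) - (LINT s:{0..t}|lborel. Vfun_deriv l L ?f0 (\<Theta> s) (G (\<Theta> s)))"
      by (rule decreases_by_integralD(2)[OF D])
    then show "Vfun l L ?f0 (\<Theta> t) = Vfun l L ?f0 (\<Theta> 0) - 4 * real L * (LINT s:{0..t}|lborel.
        (\<integral>x. (\<Sum>i=1..l L. (netInf l (\<Theta> s) L x i - f x i) * (netInf l (\<Theta> s) L x i - ?f0 i)) \<partial>\<mu>))"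
      by (simp only: rate set_integral_mult_right)
  qed
qed

end
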